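(* Let $A$ be a valuation ring with maximal ideal $\mathfrak m$ and residue field $k$, and assume $2\in A^\times$. Let $[u_1,\dots,u_r]$ and $[v_1,\dots,v_s]$ be possibly empty frames in $\mathbb E^n_A$ spanning quadratic submodules $U$ and $V$ respectively. Then $U^\perp\cap V^\perp$ contains a unit vector if either (i) $n\geq m_A+r+2s$; or (ii) $n\geq m_A+r+s$ and $k$ is formally real; or (iii) $n>2P(k)r+s$ and $A$ is henselian; or (iv) $n>P(k)r+s$, $A$ is henselian, and $k$ is formally real.
   Context: $\mathbb E^n_A=(A^n,q)$, $q(x)=x_1^2+\dots+x_n^2$, $B_q(x,y)=q(x+y)-q(x)-q(y)$. A unit vector is $v$ with $q(v)=1$; a frame is a finite set of unit vectors $w_i$ with $B_q(w_i,w_j)=0$ for $i\neq j$. $S^\perp=\{x:B_q(x,s)=0\ \forall s\in S\}$. A quadratic submodule is a direct summand with restricted form; a quadratic module $(V,q)$ (finitely generated projective $V$) is non-singular if $x\mapsto B_q(x,-)$ is an isomorphism $V\to\mathrm{Hom}(V,A)$. $m_A\in\mathbb Z_{\geq1}\cup\{\infty\}$ is the smallest $m$ such that every non-singular quadratic submodule $W$ of some $\mathbb E^N_A$ with $\dim_k W/\mathfrak mW\geq m$ contains a unit vector. $P(k)$ is the smallest $p\geq1$ such that every sum of squares in $k$ is a sum of $p$ squares ($\infty$ if none). A field is formally real if $-1$ is not a sum of squares. Henselian: for $f\in A[X]$, simple roots in $k$ of $\bar f$ lift to roots of $f$ in $A$. A valuation ring is a domain $A$ with fraction field $K$ such that $x\in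 A$ or $x^{-1}\in A$ for each $x\in K^\times$. *)

theory Defs
  imports Main "HOL-Library.Extended_Nat" "HOL-Computational_Algebra.Polynomial"
    "HOL-Computational_Algebra.Fraction_Field"
begin

definition valuation_ring :: "('a::idom) itself \<Rightarrow> bool" where
  "valuation_ring _ \<longleftrightarrow>
     (\<forall>x::'a fract. x \<noteq> 0 \<longrightarrow>
        x \<in> range (\<lambda>a. Fract a 1) \<or> inverse x \<in> range (\<lambda>a. Fract a 1))"

(* pi : A -> k is a residue map: surjective ring hom onto the field k whose kernel is
   the maximal ideal m of the (local) ring A, i.e. the set of non-units. *)
definition residue_map :: "('a::comm_ring_1 \<Rightarrow> 'k::field) \<Rightarrow> bool" where
  "residue_map \<pi> \<longleftrightarrow> \<pi> 1 = 1 \<and> (\<forall>x y. \<pi> (x + y) = \<pi> x + \<pi> y)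
     \<and> (\<forall>x y. \<pi> (x * y) = \<pi> x * \<pi> y) \<and> surj \<pi>
     \<and> (\<forall>x. \<pi> x = 0 \<longleftrightarrow> \<not> x dvd 1)"

definition henselian :: "('a::comm_ring_1 \<Rightarrow> 'k::field) \<Rightarrow> bool" where
  "henselian \<pi> \<longleftrightarrow> (\<forall>(f::'a poly) (a0::'k).
      poly (map_poly \<pi> f) a0 = 0 \<and> poly (pderiv (map_poly \<pi> f)) a0 \<noteq> 0
      \<longrightarrow> (\<exists>a. poly f a = 0 \<and> \<pi> a = a0))"

(* E^n_A: vectors are functions nat => A supported on {..<n} *)
definition vecs :: "nat \<Rightarrow> (nat \<Rightarrow> 'a::comm_ring_1) set" where
  "vecs n = {x. \<forall>i\<ge>n. x i = 0}"

definition qf :: "nat \<Rightarrow> (nat \<Rightarrow> 'a::comm_ring_1) \<Rightarrow> 'a" where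
  "qf n x = (\<Sum>i<n. (x i)^2)"

definition Bq :: "nat \<Rightarrow> (nat \<Rightarrow> 'a::comm_ring_1) \<Rightarrow> (nat \<Rightarrow> 'a) \<Rightarrow> 'a" where
  "Bq n x y = qf n (\<lambda>i. x i + y i) - qf n x - qf n y"

definition unit_vector :: "nat \<Rightarrow> (nat \<Rightarrow> 'a::comm_ring_1) \<Rightarrow> bool" where
  "unit_vector n v \<longleftrightarrow> v \<in> vecs n \<and> qf n v = 1"

definition frame :: "nat \<Rightarrow> (nat \<Rightarrow> nat \<Rightarrow> 'a::comm_ring_1) \<Rightarrow> nat \<Rightarrow> bool" where
  "frame n u r \<longleftrightarrow> (\<forall>i<r. unit_vector n (u i))
     \<and> (\<forall>i<r. \<forall>j<r. i \<noteq> j \<longrightarrow> Bq n (u i) (u j) = 0)"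

definition span_frame :: "(nat \<Rightarrow> nat \<Rightarrow> 'a::comm_ring_1) \<Rightarrow> nat \<Rightarrow> (nat \<Rightarrow> 'a) set" where
  "span_frame u r = {x. \<exists>c. x = (\<lambda>k. \<Sum>i<r. c i * u i k)}"

definition perp :: "nat \<Rightarrow> (nat \<Rightarrow> 'a::comm_ring_1) set \<Rightarrow> (nat \<Rightarrow> 'a) set" where
  "perp n S = {x \<in> vecs n. \<forall>s\<in>S. Bq n x s = 0}"

definition submod :: "nat \<Rightarrow> (nat \<Rightarrow> 'a::comm_ring_1) set \<Rightarrow> bool" where
  "submod N W \<longleftrightarrow> W \<subseteq> vecs N \<and> (\<lambda>_. 0) \<in> W
     \<and> (\<forall>x\<in>W. \<forall>y\<in>W. (\<lambda>i. x i + y i) \<in> W) \<and> (\<forall>a. \<forall>x\<in>W. (\<lambda>i. a * x i) \<in> W)"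

definition quad_submod :: "nat \<Rightarrow> (nat \<Rightarrow> 'a::comm_ring_1) set \<Rightarrow> bool" where
  "quad_submod N W \<longleftrightarrow> submod N W \<and>
     (\<exists>W'. submod N W' \<and> W \<inter> W' = {\<lambda>_. 0} \<and>
        (\<forall>x\<in>vecs N. \<exists>y\<in>W. \<exists>z\<in>W'. x = (\<lambda>i. y i + z i)))"

definition linear_functional :: "(nat \<Rightarrow> 'a::comm_ring_1) set \<Rightarrow> ((nat \<Rightarrow> 'a) \<Rightarrow> 'a) \<Rightarrow> bool" where
  "linear_functional W \<phi> \<longleftrightarrow> (\<forall>x\<in>W. \<forall>y\<in>W. \<phi> (\<lambda>i. x i + y i) = \<phi> x + \<phi> y)
     \<and> (\<forall>a. \<forall>x\<in>W. \<phi> (\<lambda>i. a * x i) = a * \<phi> x)"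

(* x |-> B_q(x,-) is an isomorphism W -> Hom_A(W,A) *)
definition nonsingular :: "nat \<Rightarrow> (nat \<Rightarrow> 'a::comm_ring_1) set \<Rightarrow> bool" where
  "nonsingular N W \<longleftrightarrow>
     (\<forall>x\<in>W. (\<forall>y\<in>W. Bq N x y = 0) \<longrightarrow> x = (\<lambda>_. 0))
     \<and> (\<forall>\<phi>. linear_functional W \<phi> \<longrightarrow> (\<exists>x\<in>W. \<forall>y\<in>W. \<phi> y = Bq N x y))"

definition mW :: "('a::comm_ring_1 \<Rightarrow> 'k::field) \<Rightarrow> (nat \<Rightarrow> 'a) set \<Rightarrow> (nat \<Rightarrow> 'a) set" where
  "mW \<pi> W = {x. \<exists>(l::nat) a y. (\<forall>j<l. \<pi> (a j) = 0 \<and> y j \<in> W) \<and> x = (\<lambda>i. \<Sum>j<l. a j * y j i)}"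

(* dim_k (W / mW) >= d : there are d elements of W whose classes in W/mW are k-linearly
   independent (a k-combination sum pi(c_j) [w_j] vanishes iff sum c_j w_j in mW). *)
definition dim_res_ge :: "('a::comm_ring_1 \<Rightarrow> 'k::field) \<Rightarrow> (nat \<Rightarrow> 'a) set \<Rightarrow> nat \<Rightarrow> bool" where
  "dim_res_ge \<pi> W d \<longleftrightarrow> (\<exists>w. (\<forall>j<d. w j \<in> W) \<and>
     (\<forall>c. (\<lambda>i. \<Sum>j<d. c j * w j i) \<in> mW \<pi> W \<longrightarrow> (\<forall>j<d. \<pi> (c j) = 0)))"

definition mA_good :: "('a::comm_ring_1 \<Rightarrow> 'k::field) \<Rightarrow> nat \<Rightarrow> bool" where
  "mA_good \<pi> m \<longleftrightarrow> (\<forall>N (W::(nat \<Rightarrow> 'a) set). quad_submod N W \<and> nonsingular N W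
      \<and> dim_res_ge \<pi> W m \<longrightarrow> (\<exists>x\<in>W. qf N x = 1))"

definition m_A :: "('a::comm_ring_1 \<Rightarrow> 'k::field) \<Rightarrow> enat" where
  "m_A \<pi> = (if \<exists>m\<ge>1. mA_good \<pi> m then enat (LEAST m. m \<ge> 1 \<and> mA_good \<pi> m) else \<infinity>)"

definition sum_of_p_squares :: "'k::comm_ring_1 \<Rightarrow> nat \<Rightarrow> bool" where
  "sum_of_p_squares x p \<longleftrightarrow> (\<exists>a. x = (\<Sum>i<p. (a i)^2))"

definition sum_of_squares :: "'k::comm_ring_1 \<Rightarrow> bool" where
  "sum_of_squares x \<longleftrightarrow> (\<exists>p. sum_of_p_squares x p)"

definition pyth_good :: "('k::comm_ring_1) itself \<Rightarrow> nat \<Rightarrow> bool" where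
  "pyth_good _ p \<longleftrightarrow> (\<forall>x::'k. sum_of_squares x \<longrightarrow> sum_of_p_squares x p)"

definition pythagoras_number :: "('k::comm_ring_1) itself \<Rightarrow> enat" where
  "pythagoras_number T = (if \<exists>p\<ge>1. pyth_good T p then enat (LEAST p. p \<ge> 1 \<and> pyth_good T p) else \<infinity>)"

definition formally_real :: "('k::field) itself \<Rightarrow> bool" where
  "formally_real _ \<longleftrightarrow> \<not> sum_of_squares (-1::'k)"

end

theory Submission
  imports Defs "HOL-Library.Function_Algebras"
begin

text \<open>
  Everything happens in the orthogonal complement of a non-singular orthogonal family: orthogonal
  vectors whose norms are units. The frame \<open>u\<close> is such a family, and the vectors of the frame
  \<open>v\<close> are absorbed into it one at a time. Project \<open>v\<^sub>j\<close> onto the complement of the current family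
  and scale it to a unimodular vector, which is possible since divisibility in a valuation ring is
  total. If its norm is a unit, adjoin it. Otherwise it spans a hyperbolic plane with a dual vector,
  from which two vectors with unit norms are adjoined; this cannot happen if \<open>k\<close> is formally real,
  because the norm of a unimodular vector reduces to \<open>1\<close> plus a sum of squares. The final family has
  at most \<open>r + 2s\<close> (resp. \<open>r + s\<close>) vectors and its complement lies in \<open>U\<^sup>\<bottom> \<inter> V\<^sup>\<bottom>\<close>.

  In cases (i) and (ii), completing the family to \<open>n\<close> vectors shows that its complement is a
  non-singular quadratic submodule of residue dimension at least \<open>m\<^sub>A\<close>, hence contains a unit
  vector. In cases (iii) and (iv) the family is built from \<open>v\<close> by absorbing \<open>u\<close>, and the problem
  is reduced modulo the maximal ideal: over \<open>k\<close> the norms of the at most \<open>2r\<close> (resp. \<open>r\<close>) added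
  vectors are sums of \<open>P(k)\<close> squares, so they can be realised on fresh blocks of coordinates, and
  Witt's extension theorem yields a residual unit vector orthogonal to the family. It lifts to the
  complement, and Hensel's lemma rescales the lift to a unit vector.
\<close>

definition dot :: "nat \<Rightarrow> (nat \<Rightarrow> 'a::comm_ring_1) \<Rightarrow> (nat \<Rightarrow> 'a) \<Rightarrow> 'a" where
  "dot n x y = (\<Sum>i<n. x i * y i)"

definition std_basis :: "nat \<Rightarrow> nat \<Rightarrow> 'a::zero_neq_one" where
  "std_basis i = (\<lambda>j. if j = i then 1 else 0)"

definition orthogonal_family :: "nat \<Rightarrow> (nat \<Rightarrow> nat \<Rightarrow> 'a::comm_ring_1) \<Rightarrow> nat \<Rightarrow> bool" where
  "orthogonal_family n g T \<longleftrightarrow> (\<forall>l<T. \<forall>m<T. l \<noteq> m \<longrightarrow> dot n (g l) (g m) = 0)"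

lemma std_basis_apply [simp]: "std_basis i j = (if j = i then 1 else 0)"
  by (simp add: std_basis_def)

lemma dot_commute: "dot n x y = dot n y x"
  by (simp add: dot_def mult.commute)

lemma dot_zero_left [simp]: "dot n (\<lambda>_. 0) y = 0"
  by (simp add: dot_def)

lemma dot_zero_right [simp]: "dot n x (\<lambda>_. 0) = 0"
  by (simp add: dot_def)

lemma dot_add_left [simp]: "dot n (\<lambda>i. x i + y i) z = dot n x z + dot n y z"
  by (simp add: dot_def sum.distrib algebra_simps)

lemma dot_add_right [simp]: "dot n z (\<lambda>i. x i + y i) = dot n z x + dot n z y"
  by (simp add: dot_def sum.distrib algebra_simps)

lemma dot_diff_left [simp]: "dot n (\<lambda>i. x i - y i) z = dot n x z - dot n y z"
  by (simp add: dot_def sum_subtractf algebra_simps)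

lemma dot_diff_right [simp]: "dot n z (\<lambda>i. x i - y i) = dot n z x - dot n z y"
  by (simp add: dot_def sum_subtractf algebra_simps)

lemma dot_scale_left [simp]: "dot n (\<lambda>i. a * x i) z = a * dot n x z"
  by (simp add: dot_def sum_distrib_left algebra_simps)

lemma dot_scale_right [simp]: "dot n z (\<lambda>i. a * x i) = a * dot n z x"
  by (simp add: dot_def sum_distrib_left algebra_simps)

lemma dot_minus_left [simp]: "dot n (\<lambda>i. - x i) z = - dot n x z"
  by (simp add: dot_def sum_negf)

lemma dot_minus_right [simp]: "dot n z (\<lambda>i. - x i) = - dot n z x"
  by (simp add: dot_def sum_negf)

lemma dot_sum_left [simp]: "dot n (\<lambda>i. \<Sum>l<T. c l * g l i) z = (\<Sum>l<T. c l * dot n (g l) z)"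
  unfolding dot_def
  by (simp add: sum_distrib_left sum_distrib_right mult.assoc sum.swap[of _ "{..<n}"])

lemma dot_sum_right [simp]: "dot n z (\<lambda>i. \<Sum>l<T. c l * g l i) = (\<Sum>l<T. c l * dot n z (g l))"
  by (simp only: dot_commute[of n z] dot_sum_left)

lemma dot_cong:
  "(\<And>i. i < n \<Longrightarrow> x i = x' i) \<Longrightarrow> (\<And>i. i < n \<Longrightarrow> y i = y' i) \<Longrightarrow> dot n x y = dot n x' y'"
  unfolding dot_def by (rule sum.cong) auto

lemma dot_std_basis_right [simp]: "i < n \<Longrightarrow> dot n x (std_basis i) = x i"
  unfolding dot_def by (simp add: if_distrib cong: if_cong)

lemma dot_std_basis_left [simp]: "i < n \<Longrightarrow> dot n (std_basis i) x = x i"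
  by (simp add: dot_commute)

lemma dot_eq_0_if_disjoint: "(\<And>l. l < n \<Longrightarrow> x l * y l = 0) \<Longrightarrow> dot n x y = 0"
  unfolding dot_def by (rule sum.neutral) auto

lemma dot_restrict:
  assumes "n \<le> M" "\<And>l. n \<le> l \<Longrightarrow> l < M \<Longrightarrow> x l = 0"
  shows "dot M x y = dot n x y"
  unfolding dot_def by (rule sum.mono_neutral_right) (use assms in auto)

lemma dot_sum_orthogonal_family:
  assumes "orthogonal_family n g T" "m < T"
  shows "(\<Sum>l<T. a l * dot n (g l) (g m)) = a m * dot n (g m) (g m)"
proof -
  have "(\<Sum>l<T. a l * dot n (g l) (g m)) = (\<Sum>l<T. if l = m then a m * dot n (g m) (g m) else 0)"
    by (rule sum.cong) (use assms in \<open>auto simp: orthogonal_family_def\<close>)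
  then show ?thesis using assms(2) by simp
qed

lemma qf_eq_dot: "qf n x = dot n x x"
  by (simp add: qf_def dot_def power2_eq_square)

lemma Bq_eq_dot: "Bq n x y = 2 * dot n x y"
  by (simp add: Bq_def qf_eq_dot dot_commute[of n y x])

lemma frame_dot_self: "frame n u r \<Longrightarrow> i < r \<Longrightarrow> dot n (u i) (u i) = 1"
  by (simp add: frame_def unit_vector_def qf_eq_dot)

section \<open>Linear algebra over a field\<close>

definition reflect :: "nat \<Rightarrow> (nat \<Rightarrow> 'k::field) \<Rightarrow> (nat \<Rightarrow> 'k) \<Rightarrow> nat \<Rightarrow> 'k" where
  "reflect M w x = (\<lambda>i. x i - (2 * dot M x w / dot M w w) * w i)"

lemma dot_reflect:
  assumes "dot M w w \<noteq> 0"
  shows "dot M (reflect M w x) (reflect M w y) = dot M x y"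
  using assms unfolding reflect_def dot_diff_left dot_diff_right dot_scale_left dot_scale_right
  by (simp add: dot_commute[of M w x] dot_commute[of M w y] field_simps)

lemma dot_reflect_orth: "dot M w g = 0 \<Longrightarrow> dot M (reflect M w x) g = dot M x g"
  unfolding reflect_def dot_diff_left dot_scale_left by simp

lemma reflect_maps:
  assumes "dot M a a = dot M b b" and w: "dot M (\<lambda>i. a i - b i) (\<lambda>i. a i - b i) \<noteq> 0"
  shows "reflect M (\<lambda>i. a i - b i) a = b"
proof -
  let ?w = "\<lambda>i. a i - b i"
  have "dot M ?w ?w = 2 * dot M a ?w"
    using assms(1) by (simp add: dot_commute[of M b a] algebra_simps)
  then have coeff: "2 * dot M a ?w / dot M ?w ?w = 1"
    using w by simp
  show ?thesis unfolding reflect_def coeff by simp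
qed

lemma exists_isometry_mapping:
  fixes a b :: "nat \<Rightarrow> 'k::field"
  assumes two: "(2::'k) \<noteq> 0" and eq: "dot M a a = dot M b b" and nz: "dot M a a \<noteq> 0"
  shows "\<exists>\<sigma>. (\<forall>x y. dot M (\<sigma> x) (\<sigma> y) = dot M x y) \<and> \<sigma> a = b \<and>
     (\<forall>x g. dot M a g = 0 \<longrightarrow> dot M b g = 0 \<longrightarrow> dot M (\<sigma> x) g = dot M x g)"
proof -
  have diff: "dot M (\<lambda>i. x i - y i) (\<lambda>i. x i - y i) = 2 * (dot M x x - dot M x y)"
    if "dot M x x = dot M y y" for x y :: "nat \<Rightarrow> 'k"
    using that by (simp add: dot_commute[of M y x] algebra_simps)
  have fix_orth: "dot M (reflect M (\<lambda>i. x i - y i) z) g = dot M z g"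
    if "dot M x g = 0" "dot M y g = 0" for x y z g :: "nat \<Rightarrow> 'k"
    by (rule dot_reflect_orth) (simp add: that)
  show ?thesis
  proof (cases "dot M (\<lambda>i. a i - b i) (\<lambda>i. a i - b i) = 0")
    case False
    then show ?thesis using reflect_maps[OF eq False] dot_reflect[OF False] fix_orth by blast
  next
    case True
    \<comment> \<open>then \<open>a + b\<close> is anisotropic: reflect \<open>a\<close> to \<open>-b\<close>, and then \<open>-b\<close> to \<open>b\<close>\<close>
    let ?c = "\<lambda>i. - b i"
    have ab: "dot M a b = dot M a a" using True diff[OF eq] two by simp
    have eq': "dot M a a = dot M ?c ?c" "dot M ?c ?c = dot M b b" using eq by simp_all
    have four: "(4::'k) \<noteq> 0" using two mult_eq_0_iff[of "2::'k" 2] by simp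
    have w1: "dot M (\<lambda>i. a i - ?c i) (\<lambda>i. a i - ?c i) \<noteq> 0"
      unfolding diff[OF eq'(1)] using ab nz four by simp
    have w2: "dot M (\<lambda>i. ?c i - b i) (\<lambda>i. ?c i - b i) \<noteq> 0"
      unfolding diff[OF eq'(2)] using eq nz four by simp
    let ?\<sigma> = "\<lambda>x. reflect M (\<lambda>i. ?c i - b i) (reflect M (\<lambda>i. a i - ?c i) x)"
    have "?\<sigma> a = b" using reflect_maps[OF eq'(1) w1] reflect_maps[OF eq'(2) w2] by simp
    moreover have "dot M (?\<sigma> x) g = dot M x g" if "dot M a g = 0" "dot M b g = 0" for x g
    proof -
      have "dot M (?\<sigma> x) g = dot M (reflect M (\<lambda>i. a i - ?c i) x) g"
        by (rule fix_orth) (simp_all add: that)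
      also have "\<dots> = dot M x g" by (rule fix_orth) (simp_all add: that)
      finally show ?thesis .
    qed
    ultimately show ?thesis using dot_reflect[OF w1] dot_reflect[OF w2] by (intro exI[of _ ?\<sigma>]) simp
  qed
qed

lemma witt_extension:
  fixes a b :: "nat \<Rightarrow> nat \<Rightarrow> 'k::field" and G :: "(nat \<Rightarrow> 'k) set"
  assumes two: "(2::'k) \<noteq> 0"
    and "orthogonal_family M a (t + K)" "\<forall>i<t + K. dot M (a i) (a i) \<noteq> 0"
    and "\<forall>i<t + K. \<forall>g\<in>G. dot M (a i) g = 0"
    and "orthogonal_family M b t" "\<forall>i<t. \<forall>g\<in>G. dot M (b i) g = 0"
    and "\<forall>i<t. dot M (b i) (b i) = dot M (a i) (a i)"
  shows "\<exists>x. orthogonal_family M x K \<and> (\<forall>j<K. dot M (x j) (x j) = dot M (a (t + j)) (a (t + j)))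
     \<and> (\<forall>j<K. \<forall>g\<in>G. dot M (x j) g = 0) \<and> (\<forall>j<K. \<forall>i<t. dot M (x j) (b i) = 0)"
  using assms(2-)
proof (induction t arbitrary: G a b)
  case 0
  then show ?case by (intro exI[of _ a]) auto
next
  case (Suc t)
  have "dot M (a 0) (a 0) = dot M (b 0) (b 0)" "dot M (a 0) (a 0) \<noteq> 0"
    using Suc.prems by auto
  then obtain \<sigma> where iso: "\<forall>x y. dot M (\<sigma> x) (\<sigma> y) = dot M x y" and \<sigma>a: "\<sigma> (a 0) = b 0"
    and pres: "\<forall>x g. dot M (a 0) g = 0 \<longrightarrow> dot M (b 0) g = 0 \<longrightarrow> dot M (\<sigma> x) g = dot M x g"
    using exists_isometry_mapping[OF two] by blast
  define a' where "a' = (\<lambda>i. \<sigma> (a (Suc i)))"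
  have a'_orth: "dot M (a' i) g = 0" if "i < t + K" "g \<in> insert (b 0) G" for i g
  proof (cases "g = b 0")
    case True
    then have "dot M (a' i) g = dot M (a (Suc i)) (a 0)" by (metis a'_def iso \<sigma>a)
    then show ?thesis using Suc.prems(1) that(1) by (simp add: orthogonal_family_def)
  next
    case False
    then have "g \<in> G" using that(2) by simp
    then show ?thesis using Suc.prems(3,5) pres that(1) by (simp add: a'_def)
  qed
  have "\<exists>x. orthogonal_family M x K \<and> (\<forall>j<K. dot M (x j) (x j) = dot M (a' (t + j)) (a' (t + j)))
     \<and> (\<forall>j<K. \<forall>g\<in>insert (b 0) G. dot M (x j) g = 0) \<and> (\<forall>j<K. \<forall>i<t. dot M (x j) (b (Suc i)) = 0)"
    by (rule Suc.IH) (use Suc.prems a'_orth in \<open>auto simp: orthogonal_family_def a'_def iso\<close>)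
  then obtain x where x: "orthogonal_family M x K"
    "\<forall>j<K. dot M (x j) (x j) = dot M (a' (t + j)) (a' (t + j))"
    "\<forall>j<K. \<forall>g\<in>insert (b 0) G. dot M (x j) g = 0" "\<forall>j<K. \<forall>i<t. dot M (x j) (b (Suc i)) = 0"
    by blast
  have "\<forall>j<K. \<forall>i<Suc t. dot M (x j) (b i) = 0"
    using x(3,4) by (auto simp: less_Suc_eq_0_disj)
  then show ?case using x by (intro exI[of _ x]) (auto simp: a'_def iso)
qed

definition block_vec :: "nat \<Rightarrow> nat \<Rightarrow> (nat \<Rightarrow> 'a) \<Rightarrow> nat \<Rightarrow> nat \<Rightarrow> 'a::zero" where
  "block_vec n p t i = (\<lambda>l. if n + i * p \<le> l \<and> l < n + i * p + p then t (l - (n + i * p)) else 0)"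

lemma block_vec_below: "l < n \<Longrightarrow> block_vec n p t i l = 0"
  by (simp add: block_vec_def)

lemma block_vec_disjoint:
  fixes t t' :: "nat \<Rightarrow> 'a::mult_zero"
  assumes "i \<noteq> j"
  shows "block_vec n p t i l * block_vec n p t' j l = 0"
proof (cases "i < j")
  case True
  then have "Suc i * p \<le> j * p" by (intro mult_le_mono1) simp
  then show ?thesis by (auto simp: block_vec_def)
next
  case False
  then have "Suc j * p \<le> i * p" using assms by (intro mult_le_mono1) simp
  then show ?thesis by (auto simp: block_vec_def)
qed

lemma dot_block_vec_disjoint:
  "i \<noteq> j \<Longrightarrow> dot M (block_vec n p t i) (block_vec n p t' j) = 0"
  by (simp add: dot_eq_0_if_disjoint block_vec_disjoint)

lemma dot_block_vec_self:
  assumes "i < c"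
  shows "dot (n + c * p) (block_vec n p t i) (block_vec n p t i) = (\<Sum>l<p. (t l)^2)"
proof -
  have "Suc i * p \<le> c * p" using assms by (intro mult_le_mono1) simp
  then have "dot (n + c * p) (block_vec n p t i) (block_vec n p t i)
      = (\<Sum>l\<in>{n + i * p..<n + i * p + p}. (block_vec n p t i l)^2)"
    unfolding dot_def power2_eq_square
    by (intro sum.mono_neutral_right) (auto simp: block_vec_def)
  also have "\<dots> = (\<Sum>l\<in>{0 + (n + i * p)..<p + (n + i * p)}. (t (l - (n + i * p)))^2)"
    by (rule sum.cong) (auto simp: block_vec_def add.commute)
  also have "\<dots> = (\<Sum>l<p. (t l)^2)"
    by (subst sum.shift_bounds_nat_ivl) (simp add: atLeast0LessThan)
  finally show ?thesis .
qed

lemma orthonormal_family_avoiding_coordinates: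
  fixes x :: "nat \<Rightarrow> nat \<Rightarrow> 'k::field"
  assumes two: "(2::'k) \<noteq> 0"
    and x: "orthogonal_family (n + d) x (Suc d)" "\<forall>j<Suc d. dot (n + d) (x j) (x j) = 1"
      "\<forall>j<Suc d. \<forall>g\<in>G. dot (n + d) (x j) g = 0"
    and G: "\<forall>g\<in>G. \<forall>l\<ge>n. g l = 0"
  shows "\<exists>y\<in>vecs n. dot n y y = 1 \<and> (\<forall>g\<in>G. dot n y g = 0)"
proof -
  have "\<exists>y. orthogonal_family (n + d) y 1
      \<and> (\<forall>j<1. dot (n + d) (y j) (y j) = dot (n + d) (x (d + j)) (x (d + j)))
      \<and> (\<forall>j<1. \<forall>g\<in>G. dot (n + d) (y j) g = 0)
      \<and> (\<forall>j<1. \<forall>i<d. dot (n + d) (y j) (std_basis (n + i)) = 0)"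
    by (rule witt_extension[OF two, where b = "\<lambda>i. std_basis (n + i)"]) (use x G in \<open>auto simp: orthogonal_family_def\<close>)
  then obtain y0 where y0: "dot (n + d) y0 y0 = 1" "\<forall>g\<in>G. dot (n + d) y0 g = 0"
    "\<forall>i<d. y0 (n + i) = 0"
    using x(2) by auto
  have y0_high: "y0 l = 0" if "n \<le> l" "l < n + d" for l
    using y0(3) that by (metis le_add_diff_inverse less_diff_conv2 add.commute)
  define y where "y = (\<lambda>l. if l < n then y0 l else 0)"
  have y_dot: "dot n y w = dot (n + d) y0 w" for w
  proof -
    have "dot n y w = dot n y0 w" by (rule dot_cong) (simp_all add: y_def)
    also have "\<dots> = dot (n + d) y0 w" by (rule dot_restrict[symmetric]) (simp_all add: y0_high)
    finally show ?thesis .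
  qed
  have "dot n y y = dot n y0 y0" by (rule dot_cong) (simp_all add: y_def)
  also have "\<dots> = 1"
    using y0(1) dot_restrict[of n "n + d" y0 y0] y0_high by simp
  finally have "dot n y y = 1" .
  moreover have "y \<in> vecs n" by (simp add: y_def vecs_def)
  moreover have "\<forall>g\<in>G. dot n y g = 0" using y0(2) by (simp add: y_dot)
  ultimately show ?thesis by blast
qed

definition padded_basis :: "nat \<Rightarrow> nat \<Rightarrow> (nat \<Rightarrow> nat \<Rightarrow> 'a) \<Rightarrow> nat \<Rightarrow> nat \<Rightarrow> nat \<Rightarrow> 'a::zero_neq_one" where
  "padded_basis n p t c i = (if i < c then block_vec n p (t i) i else std_basis (i - c))"

lemma orthogonal_family_padded_basis:
  "orthogonal_family (n + c * p) (padded_basis n p t c) (c + n)"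
  unfolding orthogonal_family_def
  by (auto simp: padded_basis_def block_vec_below dot_block_vec_disjoint)

lemma dot_padded_basis_self:
  "i < c + n \<Longrightarrow> dot (n + c * p) (padded_basis n p t c i) (padded_basis n p t c i)
     = (if i < c then (\<Sum>l<p. (t i l)^2) else 1)"
  by (simp add: padded_basis_def dot_block_vec_self)

lemma orthonormal_orth_family_padded:
  fixes g t :: "nat \<Rightarrow> nat \<Rightarrow> 'k::field"
  assumes two: "(2::'k) \<noteq> 0"
    and g: "\<forall>l<s + c. g l \<in> vecs n" "orthogonal_family n g (s + c)"
    and norm1: "\<forall>j<s. dot n (g j) (g j) = 1"
    and norm_sq: "\<forall>i<c. dot n (g (s + i)) (g (s + i)) = (\<Sum>l<p. (t i l)^2)"
    and nz: "\<forall>i<c. dot n (g (s + i)) (g (s + i)) \<noteq> 0"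
    and "s \<le> n"
  shows "\<exists>x. orthogonal_family (n + c * p) x (n - s) \<and> (\<forall>j<n - s. dot (n + c * p) (x j) (x j) = 1)
     \<and> (\<forall>j<n - s. \<forall>l<s + c. dot (n + c * p) (x j) (g l) = 0)"
proof -
  \<comment> \<open>In the padded space, the norm of \<open>g (s + i)\<close> is realised by a vector supported on the
    \<open>i\<close>-th new block of \<open>p\<close> coordinates, and Witt extension maps these blocks onto the
    \<open>g (s + i)\<close> and \<open>std_basis j\<close> onto \<open>g j\<close> for \<open>j < s\<close>.\<close>
  define a where "a = padded_basis n p t c"
  define \<sigma> where "\<sigma> = (\<lambda>i. if i < c then s + i else i - c)"
  have g_dot: "dot (n + c * p) (g l) y = dot n (g l) y" if "l < s + c" for l y
    by (rule dot_restrict) (use g(1) that in \<open>auto simp: vecs_def\<close>)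
  have "\<exists>x. orthogonal_family (n + c * p) x (n - s)
     \<and> (\<forall>j<n - s. dot (n + c * p) (x j) (x j) = dot (n + c * p) (a (c + s + j)) (a (c + s + j)))
     \<and> (\<forall>j<n - s. \<forall>g\<in>{}. dot (n + c * p) (x j) g = 0)
     \<and> (\<forall>j<n - s. \<forall>i<c + s. dot (n + c * p) (x j) (g (\<sigma> i)) = 0)"
  proof (rule witt_extension[OF two])
    show "orthogonal_family (n + c * p) a (c + s + (n - s))"
      using orthogonal_family_padded_basis \<open>s \<le> n\<close> by (simp add: a_def)
    show "\<forall>i<c + s + (n - s). dot (n + c * p) (a i) (a i) \<noteq> 0"
      using norm_sq nz \<open>s \<le> n\<close> by (simp add: a_def dot_padded_basis_self)
    show "orthogonal_family (n + c * p) (\<lambda>i. g (\<sigma> i)) (c + s)"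
      unfolding orthogonal_family_def
    proof (intro allI impI)
      fix i j assume "i < c + s" "j < c + s" "i \<noteq> j"
      then have "\<sigma> i < s + c" "\<sigma> j < s + c" "\<sigma> i \<noteq> \<sigma> j" by (auto simp: \<sigma>_def)
      then show "dot (n + c * p) (g (\<sigma> i)) (g (\<sigma> j)) = 0"
        using g(2) by (simp add: g_dot orthogonal_family_def)
    qed
    show "\<forall>i<c + s. dot (n + c * p) (g (\<sigma> i)) (g (\<sigma> i)) = dot (n + c * p) (a i) (a i)"
      using norm1 norm_sq \<open>s \<le> n\<close> by (simp add: a_def \<sigma>_def g_dot dot_padded_basis_self)
  qed simp_all
  then obtain x where x: "orthogonal_family (n + c * p) x (n - s)"
    "\<forall>j<n - s. dot (n + c * p) (x j) (x j) = 1"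
    "\<forall>j<n - s. \<forall>i<c + s. dot (n + c * p) (x j) (g (\<sigma> i)) = 0"
    using \<open>s \<le> n\<close> by (auto simp: a_def dot_padded_basis_self)
  have "\<forall>j<n - s. \<forall>l<s + c. dot (n + c * p) (x j) (g l) = 0"
  proof (intro allI impI)
    fix j l assume j: "j < n - s" and l: "l < s + c"
    have "l = \<sigma> (if l < s then c + l else l - s)" using l by (auto simp: \<sigma>_def)
    moreover have "(if l < s then c + l else l - s) < c + s" using l by auto
    ultimately show "dot (n + c * p) (x j) (g l) = 0" using x(3) j by metis
  qed
  then show ?thesis using x(1,2) by blast
qed

lemma unit_vector_orth_small_family:
  fixes g :: "nat \<Rightarrow> nat \<Rightarrow> 'k::field"
  assumes two: "(2::'k) \<noteq> 0"
    and g: "\<forall>l<s + c. g l \<in> vecs n" "orthogonal_family n g (s + c)"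
    and norm1: "\<forall>j<s. dot n (g j) (g j) = 1"
    and norm_sq: "\<forall>i<c. dot n (g (s + i)) (g (s + i)) \<noteq> 0
       \<and> sum_of_p_squares (dot n (g (s + i)) (g (s + i))) p"
    and small: "c * p + s < n"
  shows "\<exists>x\<in>vecs n. dot n x x = 1 \<and> (\<forall>l<s + c. dot n x (g l) = 0)"
proof -
  obtain t where t: "\<forall>i<c. dot n (g (s + i)) (g (s + i)) = (\<Sum>l<p. (t i l)^2)"
    using norm_sq unfolding sum_of_p_squares_def by metis
  have "\<forall>i<c. dot n (g (s + i)) (g (s + i)) \<noteq> 0" "s \<le> n" using norm_sq small by auto
  then obtain x where x: "orthogonal_family (n + c * p) x (n - s)"
    "\<forall>j<n - s. dot (n + c * p) (x j) (x j) = 1" "\<forall>j<n - s. \<forall>l<s + c. dot (n + c * p) (x j) (g l) = 0"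
    using orthonormal_orth_family_padded[OF two g norm1 t] by blast
  have few: "Suc (c * p) \<le> n - s" using small by simp
  have "\<exists>y\<in>vecs n. dot n y y = 1 \<and> (\<forall>h\<in>g ` {..<s + c}. dot n y h = 0)"
  proof (rule orthonormal_family_avoiding_coordinates[OF two, where d = "c * p" and x = x])
    show "orthogonal_family (n + c * p) x (Suc (c * p))"
      using x(1) few unfolding orthogonal_family_def by simp
    show "\<forall>j<Suc (c * p). dot (n + c * p) (x j) (x j) = 1"
      using x(2) few by simp
    show "\<forall>j<Suc (c * p). \<forall>h\<in>g ` {..<s + c}. dot (n + c * p) (x j) h = 0"
      using x(3) few by simp
    show "\<forall>h\<in>g ` {..<s + c}. \<forall>l\<ge>n. h l = 0"
      using g(1) by (simp add: vecs_def)
  qed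
  then show ?thesis by auto
qed

interpretation fun_vs: vector_space "\<lambda>(c::'k::field) (x::nat \<Rightarrow> 'k) j. c * x j"
  by unfold_locales (auto simp: algebra_simps fun_eq_iff)

lemma fun_vs_independent_std_basis:
  "fun_vs.independent (std_basis ` {..<n} :: (nat \<Rightarrow> 'k::field) set)"
  unfolding fun_vs.dependent_explicit
proof clarify
  fix t u v assume t: "finite t" "t \<subseteq> std_basis ` {..<n}"
    and sum0: "(\<Sum>v\<in>t. (\<lambda>j. u v * v j)) = 0" and v: "v \<in> t" "u v \<noteq> (0::'k)"
  obtain i where i: "v = std_basis i" using t(2) v(1) by auto
  have "0 = (\<Sum>w\<in>t. (\<lambda>j. u w * w j)) i" using sum0 by simp
  also have "\<dots> = (\<Sum>w\<in>t. u w * w i)" by (induction t rule: infinite_finite_induct) simp_all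
  also have "\<dots> = (\<Sum>w\<in>t. if w = v then u v else 0)"
  proof (rule sum.cong)
    fix w assume "w \<in> t"
    then obtain k where k: "w = std_basis k" using t(2) by auto
    show "u w * w i = (if w = v then u v else 0)"
    proof (cases "k = i")
      case True
      then show ?thesis using i k by simp
    next
      case False
      then have "w i = 0" "v i = 1" using i k by simp_all
      then show ?thesis by auto
    qed
  qed simp
  also have "\<dots> = u v" using t(1) v(1) by simp
  finally show False using v(2) by simp
qed

lemma std_basis_in_span_card:
  fixes h :: "nat \<Rightarrow> nat \<Rightarrow> 'k::field"
  assumes span: "\<forall>i<n. \<exists>c. std_basis i = (\<lambda>j. \<Sum>l<T. c l * h l j)"
  shows "n \<le> T"
proof -
  have "inj_on (std_basis :: nat \<Rightarrow> nat \<Rightarrow> 'k) {..<n}"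
  proof (rule inj_onI)
    fix i j assume "std_basis i = (std_basis j :: nat \<Rightarrow> 'k)"
    then have "(std_basis i i :: 'k) = std_basis j i" by (rule fun_cong)
    then show "i = j" by (simp split: if_splits)
  qed
  then have card: "card (std_basis ` {..<n} :: (nat \<Rightarrow> 'k) set) = n" by (simp add: card_image)
  have "std_basis ` {..<n} \<subseteq> fun_vs.span (h ` {..<T})"
  proof
    fix x :: "nat \<Rightarrow> 'k" assume "x \<in> std_basis ` {..<n}"
    then obtain c where "x = (\<lambda>j. \<Sum>l<T. c l * h l j)" using span by auto
    moreover have "(\<lambda>j. \<Sum>l<T. c l * h l j) = (\<Sum>l<T. (\<lambda>j. c l * h l j))"
      by (induction T) (simp_all add: fun_eq_iff)
    moreover have "(\<Sum>l<T. (\<lambda>j. c l * h l j)) \<in> fun_vs.span (h ` {..<T})"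
      by (intro fun_vs.span_sum fun_vs.span_scale fun_vs.span_base) simp
    ultimately show "x \<in> fun_vs.span (h ` {..<T})" by simp
  qed
  then have "card (std_basis ` {..<n} :: (nat \<Rightarrow> 'k) set) \<le> card (h ` {..<T})"
    using fun_vs.independent_span_bound[of "h ` {..<T}" "std_basis ` {..<n}"]
      fun_vs_independent_std_basis[of n] by simp
  also have "\<dots> \<le> T" using card_image_le[of "{..<T}" h] by simp
  finally show ?thesis using card by simp
qed

section \<open>Valuation rings\<close>

lemma valuation_ring_dvd_total:
  assumes "valuation_ring TYPE('a::idom)"
  shows "(x::'a) dvd y \<or> y dvd x"
proof (cases "x = 0 \<or> y = 0")
  case True
  then show ?thesis by auto
next
  case False
  then have "Fract y x \<noteq> 0" by (simp add: Zero_fract_def eq_fract)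
  with assms consider "Fract y x \<in> range (\<lambda>a. Fract a 1)" | "Fract x y \<in> range (\<lambda>a. Fract a 1)"
    unfolding valuation_ring_def by fastforce
  then show ?thesis
  proof cases
    case 1
    then obtain a where "Fract y x = Fract a 1" by auto
    then have "y = a * x" using False by (simp add: eq_fract)
    then show ?thesis by simp
  next
    case 2
    then obtain a where "Fract x y = Fract a 1" by auto
    then have "x = a * y" using False by (simp add: eq_fract)
    then show ?thesis by simp
  qed
qed

lemma exists_entry_dvd_all:
  fixes w :: "nat \<Rightarrow> 'a::comm_ring_1"
  assumes total: "\<And>x y::'a. x dvd y \<or> y dvd x" and "0 < n"
  shows "\<exists>i<n. \<forall>j<n. w i dvd w j"
  using \<open>0 < n\<close>
proof (induction n)
  case 0
  then show ?case by simp
next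
  case (Suc n)
  show ?case
  proof (cases "n = 0")
    case True
    then show ?thesis by auto
  next
    case False
    then obtain i where i: "i < n" "\<forall>j<n. w i dvd w j" using Suc.IH by auto
    show ?thesis
    proof (cases "w i dvd w n")
      case True
      then show ?thesis using i by (intro exI[of _ i]) (auto simp: less_Suc_eq)
    next
      case False
      then have "w n dvd w i" using total by blast
      then show ?thesis using i by (intro exI[of _ n]) (auto simp: less_Suc_eq intro: dvd_trans)
    qed
  qed
qed

lemma valuation_ring_primitive_vector:
  fixes w :: "nat \<Rightarrow> 'a::idom"
  assumes val: "valuation_ring TYPE('a)" and w: "w \<in> vecs n" "w \<noteq> (\<lambda>_. 0)"
  shows "\<exists>a v i. a \<noteq> 0 \<and> i < n \<and> v \<in> vecs n \<and> v i = 1 \<and> w = (\<lambda>j. a * v j)"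
proof -
  from w(2) obtain j0 where j0: "w j0 \<noteq> 0" by (auto simp: fun_eq_iff)
  have "j0 < n"
  proof (rule ccontr)
    assume "\<not> j0 < n"
    with w(1) j0 show False by (simp add: vecs_def)
  qed
  then obtain i where i: "i < n" "\<forall>j<n. w i dvd w j"
    using exists_entry_dvd_all[OF valuation_ring_dvd_total[OF val], of n w] by auto
  have "w i dvd w j0" using i(2) \<open>j0 < n\<close> by blast
  then have "w i \<noteq> 0" using j0 by auto
  have "\<forall>j. \<exists>d. j < n \<longrightarrow> w j = w i * d" using i(2) by (auto simp: dvd_def)
  from choice[OF this] obtain d where d: "\<And>j. j < n \<Longrightarrow> w j = w i * d j" by blast
  define v where "v = (\<lambda>j. if j < n then if j = i then 1 else d j else 0)"
  have "w j = w i * v j" for j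
  proof (cases "j < n \<and> j \<noteq> i")
    case True
    then show ?thesis using d[of j] by (simp add: v_def)
  next
    case False
    then show ?thesis using w(1) by (auto simp: v_def vecs_def)
  qed
  then have "w = (\<lambda>j. w i * v j)" by (rule ext)
  then show ?thesis
    using \<open>w i \<noteq> 0\<close> i(1) by (intro exI[of _ "w i"] exI[of _ v] exI[of _ i]) (simp add: v_def vecs_def)
qed

definition orth_compl :: "nat \<Rightarrow> (nat \<Rightarrow> nat \<Rightarrow> 'a::comm_ring_1) \<Rightarrow> nat \<Rightarrow> (nat \<Rightarrow> 'a) set" where
  "orth_compl n g T = {x \<in> vecs n. \<forall>l<T. dot n x (g l) = 0}"

lemma orth_compl_lincomb:
  "x \<in> orth_compl n g T \<Longrightarrow> y \<in> orth_compl n g T \<Longrightarrow> (\<lambda>i. a * x i + b * y i) \<in> orth_compl n g T"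
  by (simp add: orth_compl_def vecs_def)

lemma submod_orth_compl: "submod n (orth_compl n g T)"
  by (auto simp: submod_def orth_compl_def vecs_def)

lemma orth_compl_prefix:
  assumes "T \<le> T'" "\<forall>l<T. g' l = g l"
  shows "orth_compl n g' T' \<subseteq> orth_compl n g T"
proof
  fix x assume x: "x \<in> orth_compl n g' T'"
  have "dot n x (g l) = 0" if "l < T" for l
  proof -
    have "dot n x (g' l) = 0" using x that assms(1) by (simp add: orth_compl_def)
    then show ?thesis using that assms(2) by simp
  qed
  then show "x \<in> orth_compl n g T" using x by (simp add: orth_compl_def)
qed

lemma orth_compl_Suc: "orth_compl n g (Suc T) = {x \<in> orth_compl n g T. dot n x (g T) = 0}"
  by (auto simp: orth_compl_def less_Suc_eq)

lemma orth_compl_snoc: "orth_compl n (g(T := h)) (Suc T) = {x \<in> orth_compl n g T. dot n x h = 0}"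
  by (auto simp: orth_compl_def less_Suc_eq)

text \<open>When each \<open>c l\<close> inverts \<open>dot n (g l) (g l)\<close>, this is the projection onto \<open>orth_compl n g T\<close>.\<close>

definition orth_proj :: "nat \<Rightarrow> (nat \<Rightarrow> nat \<Rightarrow> 'a::comm_ring_1) \<Rightarrow> (nat \<Rightarrow> 'a) \<Rightarrow> nat
    \<Rightarrow> (nat \<Rightarrow> 'a) \<Rightarrow> nat \<Rightarrow> 'a" where
  "orth_proj n g c T x = (\<lambda>i. x i - (\<Sum>l<T. (c l * dot n x (g l)) * g l i))"

lemma orth_proj_orth:
  assumes "orthogonal_family n g T" "\<forall>l<T. c l * dot n (g l) (g l) = 1" "m < T"
  shows "dot n (orth_proj n g c T x) (g m) = 0"
proof -
  have "dot n (orth_proj n g c T x) (g m)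
      = dot n x (g m) - c m * dot n x (g m) * dot n (g m) (g m)"
    unfolding orth_proj_def using dot_sum_orthogonal_family[OF assms(1,3)] by simp
  also have "\<dots> = dot n x (g m) * (1 - c m * dot n (g m) (g m))" by (simp add: algebra_simps)
  finally show ?thesis using assms(2,3) by simp
qed

lemma orth_proj_in_orth_compl:
  assumes "orthogonal_family n g T" "\<forall>l<T. c l * dot n (g l) (g l) = 1" "\<forall>l<T. g l \<in> vecs n"
    and "x \<in> vecs n"
  shows "orth_proj n g c T x \<in> orth_compl n g T"
proof -
  have "orth_proj n g c T x \<in> vecs n" using assms(3,4) by (simp add: orth_proj_def vecs_def)
  then show ?thesis using orth_proj_orth[OF assms(1,2)] by (simp add: orth_compl_def)
qed

lemma dot_orth_proj_right:
  "y \<in> orth_compl n g T \<Longrightarrow> dot n y (orth_proj n g c T x) = dot n y x"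
  by (simp add: orth_proj_def orth_compl_def)

lemma orth_compl_expansion:
  assumes y: "y \<in> orth_compl n g T"
  shows "y = (\<lambda>j. \<Sum>i<n. y i * orth_proj n g c T (std_basis i) j)"
proof
  fix j
  have "(\<Sum>i<n. y i * orth_proj n g c T (std_basis i) j)
      = (\<Sum>i<n. y i * std_basis i j - (\<Sum>l<T. c l * g l j * (y i * g l i)))"
    by (rule sum.cong) (simp_all add: orth_proj_def right_diff_distrib sum_distrib_left algebra_simps)
  also have "\<dots> = (\<Sum>i<n. y i * std_basis i j) - (\<Sum>l<T. c l * g l j * dot n y (g l))"
    by (simp add: sum_subtractf dot_def sum_distrib_left sum.swap[of _ "{..<n}"])
  also have "(\<Sum>i<n. y i * std_basis i j) = y j"
    using y by (cases "j < n") (auto simp: orth_compl_def vecs_def if_distrib cong: if_cong)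
  finally have "(\<Sum>i<n. y i * orth_proj n g c T (std_basis i) j)
      = y j - (\<Sum>l<T. c l * g l j * dot n y (g l))" .
  moreover have "(\<Sum>l<T. c l * g l j * dot n y (g l)) = 0" using y by (simp add: orth_compl_def)
  ultimately show "y j = (\<Sum>i<n. y i * orth_proj n g c T (std_basis i) j)" by (metis diff_zero)
qed

lemma submod_zero: "submod N W \<Longrightarrow> (\<lambda>_. 0) \<in> W"
  by (simp add: submod_def)

lemma submod_add: "submod N W \<Longrightarrow> x \<in> W \<Longrightarrow> y \<in> W \<Longrightarrow> (\<lambda>i. x i + y i) \<in> W"
  by (simp add: submod_def)

lemma submod_scale: "submod N W \<Longrightarrow> x \<in> W \<Longrightarrow> (\<lambda>i. a * x i) \<in> W"
  by (simp add: submod_def)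

lemma submod_lincomb:
  fixes K :: nat
  assumes W: "submod N W" and x: "\<forall>i<K. x i \<in> W"
  shows "(\<lambda>j. \<Sum>i<K. a i * x i j) \<in> W"
  using x
proof (induction K)
  case 0
  then show ?case using submod_zero[OF W] by simp
next
  case (Suc K)
  then have "(\<lambda>j. (\<Sum>i<K. a i * x i j) + a K * x K j) \<in> W"
    by (intro submod_add[OF W] submod_scale[OF W]) simp_all
  then show ?case by simp
qed

lemma linear_functional_add:
  "linear_functional W \<phi> \<Longrightarrow> x \<in> W \<Longrightarrow> y \<in> W \<Longrightarrow> \<phi> (\<lambda>i. x i + y i) = \<phi> x + \<phi> y"
  by (simp add: linear_functional_def)

lemma linear_functional_scale:
  "linear_functional W \<phi> \<Longrightarrow> x \<in> W \<Longrightarrow> \<phi> (\<lambda>i. a * x i) = a * \<phi> x"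
  by (simp add: linear_functional_def)

lemma linear_functional_lincomb:
  fixes K :: nat
  assumes \<phi>: "linear_functional W \<phi>" and W: "submod N W" and x: "\<forall>i<K. x i \<in> W"
  shows "\<phi> (\<lambda>j. \<Sum>i<K. a i * x i j) = (\<Sum>i<K. a i * \<phi> (x i))"
  using x
proof (induction K)
  case 0
  then show ?case using linear_functional_scale[OF \<phi> submod_zero[OF W], of 0] by simp
next
  case (Suc K)
  have "(\<lambda>j. \<Sum>i<K. a i * x i j) \<in> W" "(\<lambda>j. a K * x K j) \<in> W"
    using Suc.prems by (auto intro: submod_lincomb[OF W] submod_scale[OF W])
  then have "\<phi> (\<lambda>j. (\<Sum>i<K. a i * x i j) + a K * x K j)
      = \<phi> (\<lambda>j. \<Sum>i<K. a i * x i j) + a K * \<phi> (x K)"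
    using Suc.prems by (simp add: linear_functional_add[OF \<phi>] linear_functional_scale[OF \<phi>])
  then show ?case using Suc by simp
qed

lemma submod_span_frame:
  assumes "\<forall>l<T. g l \<in> vecs n"
  shows "submod n (span_frame g T)"
  unfolding submod_def
proof (intro conjI ballI allI)
  show "span_frame g T \<subseteq> vecs n" using assms by (auto simp: span_frame_def vecs_def)
  show "(\<lambda>_. 0) \<in> span_frame g T"
    unfolding span_frame_def by (intro CollectI exI[of _ "\<lambda>_. 0"]) simp
  fix x y assume "x \<in> span_frame g T" "y \<in> span_frame g T"
  then obtain cx cy where "x = (\<lambda>k. \<Sum>i<T. cx i * g i k)" "y = (\<lambda>k. \<Sum>i<T. cy i * g i k)"
    unfolding span_frame_def by blast
  then show "(\<lambda>i. x i + y i) \<in> span_frame g T"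
    unfolding span_frame_def
    by (intro CollectI exI[of _ "\<lambda>i. cx i + cy i"]) (simp add: sum.distrib algebra_simps)
next
  fix a x assume "x \<in> span_frame g T"
  then obtain cx where "x = (\<lambda>k. \<Sum>i<T. cx i * g i k)" unfolding span_frame_def by blast
  then show "(\<lambda>i. a * x i) \<in> span_frame g T"
    unfolding span_frame_def
    by (intro CollectI exI[of _ "\<lambda>i. a * cx i"]) (simp add: sum_distrib_left algebra_simps)
qed

lemma orth_compl_inter_span_frame:
  fixes g :: "nat \<Rightarrow> nat \<Rightarrow> 'a::idom"
  assumes orth: "orthogonal_family n g T" and nz: "\<forall>l<T. dot n (g l) (g l) \<noteq> 0"
  shows "orth_compl n g T \<inter> span_frame g T = {\<lambda>_. 0}"
proof
  show "{\<lambda>_. 0} \<subseteq> orth_compl n g T \<inter> span_frame g T"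
    by (auto simp: orth_compl_def vecs_def span_frame_def intro!: exI[of _ "\<lambda>_. 0"])
  show "orth_compl n g T \<inter> span_frame g T \<subseteq> {\<lambda>_. 0}"
  proof
    fix x assume x: "x \<in> orth_compl n g T \<inter> span_frame g T"
    then obtain c where xc: "x = (\<lambda>k. \<Sum>i<T. c i * g i k)" by (auto simp: span_frame_def)
    have "c m = 0" if m: "m < T" for m
    proof -
      have "0 = dot n x (g m)" using x m by (simp add: orth_compl_def)
      also have "\<dots> = c m * dot n (g m) (g m)"
        unfolding xc by (simp add: dot_sum_orthogonal_family[OF orth m])
      finally show ?thesis using nz m by simp
    qed
    then show "x \<in> {\<lambda>_. 0}" by (simp add: xc)
  qed
qed

lemma perp_span_frame:
  fixes w :: "nat \<Rightarrow> nat \<Rightarrow> 'a::idom"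
  assumes two: "(2::'a) \<noteq> 0"
  shows "perp n (span_frame w t) = orth_compl n w t"
proof
  show "perp n (span_frame w t) \<subseteq> orth_compl n w t"
  proof
    fix x assume x: "x \<in> perp n (span_frame w t)"
    have "dot n x (w i) = 0" if "i < t" for i
    proof -
      have "w i = (\<lambda>k. \<Sum>l<t. std_basis i l * w l k)"
      proof
        fix k
        have "(\<Sum>l<t. std_basis i l * w l k) = (\<Sum>l<t. if l = i then w l k else 0)"
          by (rule sum.cong) simp_all
        then show "w i k = (\<Sum>l<t. std_basis i l * w l k)" using that by simp
      qed
      then have "w i \<in> span_frame w t" unfolding span_frame_def by blast
      then show ?thesis using x two by (simp add: perp_def Bq_eq_dot)
    qed
    then show "x \<in> orth_compl n w t" using x by (simp add: perp_def orth_compl_def)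
  qed
  show "orth_compl n w t \<subseteq> perp n (span_frame w t)"
    by (auto simp: perp_def orth_compl_def span_frame_def Bq_eq_dot)
qed

text \<open>For a residue map \<open>\<pi>\<close>, the condition \<open>\<pi> (dot n (g l) (g l)) \<noteq> 0\<close> says that the norm is a unit.\<close>

definition nonsing_orth_family
  :: "('a::comm_ring_1 \<Rightarrow> 'k::field) \<Rightarrow> nat \<Rightarrow> (nat \<Rightarrow> nat \<Rightarrow> 'a) \<Rightarrow> nat \<Rightarrow> bool" where
  "nonsing_orth_family \<pi> n g T \<longleftrightarrow>
     orthogonal_family n g T \<and> (\<forall>l<T. g l \<in> vecs n \<and> \<pi> (dot n (g l) (g l)) \<noteq> 0)"

locale residue_hom =
  fixes \<pi> :: "'a::idom \<Rightarrow> 'k::field"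
  assumes residue_map: "residue_map \<pi>" and two_unit: "(2::'a) dvd 1"
begin

lemma pi_add [simp]: "\<pi> (x + y) = \<pi> x + \<pi> y"
  using residue_map by (simp add: residue_map_def)

lemma pi_mult [simp]: "\<pi> (x * y) = \<pi> x * \<pi> y"
  using residue_map by (simp add: residue_map_def)

lemma pi_one [simp]: "\<pi> 1 = 1"
  using residue_map by (simp add: residue_map_def)

lemma pi_eq_0_iff: "\<pi> x = 0 \<longleftrightarrow> \<not> x dvd 1"
  using residue_map by (simp add: residue_map_def)

lemma pi_surj: "surj \<pi>"
  using residue_map by (simp add: residue_map_def)

lemma pi_zero [simp]: "\<pi> 0 = 0"
  by (rule pi_add[of 0 0, unfolded add_0 add_cancel_right_right])

lemma pi_minus [simp]: "\<pi> (- x) = - \<pi> x"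
  using pi_add[of "- x" x] by (simp add: eq_neg_iff_add_eq_0)

lemma pi_diff [simp]: "\<pi> (x - y) = \<pi> x - \<pi> y"
  using pi_add[of x "- y"] by simp

lemma pi_sum [simp]: "\<pi> (\<Sum>i\<in>S. f i) = (\<Sum>i\<in>S. \<pi> (f i))"
  by (induction S rule: infinite_finite_induct) simp_all

lemma pi_two [simp]: "\<pi> 2 = 2"
  by (metis one_add_one pi_add pi_one)

lemma pi_dot: "\<pi> (dot n x y) = dot n (\<lambda>i. \<pi> (x i)) (\<lambda>i. \<pi> (y i))"
  by (simp add: dot_def)

lemma two_res_neq_zero: "(2::'k) \<noteq> 0"
  using pi_eq_0_iff[of 2] two_unit by simp

lemma two_neq_zero: "(2::'a) \<noteq> 0"
  using two_unit by auto

lemma unit_inverse: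
  assumes "\<pi> x \<noteq> 0"
  obtains c where "c * x = 1"
  using assms pi_eq_0_iff by (metis dvd_def mult.commute)

lemma mW_residue: "x \<in> mW \<pi> W \<Longrightarrow> \<pi> (x i) = 0"
  by (auto simp: mW_def)

lemma nonsing_orth_family_proj:
  assumes "nonsing_orth_family \<pi> n g T"
  obtains c where "\<forall>l<T. c l * dot n (g l) (g l) = 1"
    "\<And>x. x \<in> vecs n \<Longrightarrow> orth_proj n g c T x \<in> orth_compl n g T"
proof -
  have "\<exists>c. c * dot n (g l) (g l) = 1" if "l < T" for l
    using assms that unit_inverse unfolding nonsing_orth_family_def by blast
  then have "\<forall>l. \<exists>c. l < T \<longrightarrow> c * dot n (g l) (g l) = 1" by blast
  from choice[OF this] obtain c where c: "\<forall>l<T. c l * dot n (g l) (g l) = 1" by blast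
  then show ?thesis
    using that orth_proj_in_orth_compl[OF _ c] assms by (simp add: nonsing_orth_family_def)
qed

lemma nonsing_orth_family_snoc:
  assumes fam: "nonsing_orth_family \<pi> n g T"
    and h: "h \<in> orth_compl n g T" "\<pi> (dot n h h) \<noteq> 0"
  shows "nonsing_orth_family \<pi> n (g(T := h)) (Suc T)"
proof -
  have "orthogonal_family n (g(T := h)) (Suc T)"
    unfolding orthogonal_family_def
  proof (intro allI impI)
    fix l m assume "l < Suc T" "m < Suc T" "l \<noteq> m"
    then consider "l < T" "m < T" | "l = T" "m < T" | "l < T" "m = T" by fastforce
    then show "dot n ((g(T := h)) l) ((g(T := h)) m) = 0"
    proof cases
      case 1
      then show ?thesis using fam \<open>l \<noteq> m\<close>
        by (simp add: nonsing_orth_family_def orthogonal_family_def)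
    next
      case 2
      then show ?thesis using h(1) by (simp add: orth_compl_def)
    next
      case 3
      then show ?thesis using h(1) by (simp add: orth_compl_def dot_commute[of n _ h])
    qed
  qed
  then show ?thesis
    using fam h by (simp add: nonsing_orth_family_def orth_compl_def less_Suc_eq)
qed

lemma frame_nonsing_orth_family:
  assumes "frame n u r"
  shows "nonsing_orth_family \<pi> n u r"
proof -
  have "Bq n (u i) (u j) = 0" if "i < r" "j < r" "i \<noteq> j" for i j
    using assms that by (simp add: frame_def)
  then have "orthogonal_family n u r"
    using two_neq_zero by (simp add: orthogonal_family_def Bq_eq_dot)
  moreover have "\<forall>i<r. dot n (u i) (u i) = 1" using frame_dot_self[OF assms] by blast
  ultimately show ?thesis
    using assms unfolding nonsing_orth_family_def frame_def unit_vector_def by simp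
qed

section \<open>Absorbing a vector into a non-singular family\<close>

lemma not_formally_real_if_isotropic:
  assumes "i < n" "v i = 1" "\<pi> (dot n v v) = 0"
  shows "\<not> formally_real TYPE('k)"
proof -
  define a where "a = (\<lambda>j. if j = i then 0 else \<pi> (v j))"
  have split: "(\<Sum>j<n. f j) = f i + (\<Sum>j\<in>{..<n} - {i}. f j)" for f :: "nat \<Rightarrow> 'k"
    by (rule sum.remove) (simp_all add: assms(1))
  have "\<pi> (dot n v v) = (\<Sum>j<n. (\<pi> (v j))^2)" by (simp add: pi_dot dot_def power2_eq_square)
  also have "\<dots> = 1 + (\<Sum>j\<in>{..<n} - {i}. (\<pi> (v j))^2)" using split assms(2) by simp
  also have "(\<Sum>j\<in>{..<n} - {i}. (\<pi> (v j))^2) = (\<Sum>j\<in>{..<n} - {i}. (a j)^2)"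
    by (rule sum.cong) (simp_all add: a_def)
  also have "\<dots> = (\<Sum>j<n. (a j)^2)" using split[of "\<lambda>j. (a j)^2"] by (simp add: a_def)
  finally have "-1 = (\<Sum>j<n. (a j)^2)" using assms(3) by (simp add: add_eq_0_iff)
  then show ?thesis
    unfolding formally_real_def sum_of_squares_def sum_of_p_squares_def by blast
qed

lemma exists_sign_residue_nonzero: "\<exists>\<epsilon>. \<epsilon> * \<epsilon> = 1 \<and> \<pi> (\<alpha> + 2 * \<epsilon> + \<beta>) \<noteq> 0"
proof (cases "\<pi> (\<alpha> + 2 + \<beta>) = 0")
  case False
  then show ?thesis by (intro exI[of _ 1]) simp
next
  case True
  \<comment> \<open>the two candidates differ by \<open>4\<close>, a unit\<close>
  have "\<pi> (\<alpha> + 2 * -1 + \<beta>) = \<pi> (\<alpha> + 2 + \<beta>) - 2 * 2" by simp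
  also have "\<dots> = - (2 * 2)" using True by simp
  also have "\<dots> \<noteq> 0" using two_res_neq_zero by (metis mult_eq_0_iff neg_equal_0_iff_equal)
  finally show ?thesis by (intro exI[of _ "-1"]) simp
qed

lemma isotropic_vector_split:
  assumes w: "w \<in> orth_compl n g T" and z: "z \<in> orth_compl n g T"
    and iso: "\<pi> (dot n w w) = 0" and wz: "dot n w z = 1"
  shows "\<exists>h1 h2 \<mu>. h1 \<in> orth_compl n g T \<and> h2 \<in> orth_compl n g T
    \<and> \<pi> (dot n h1 h1) \<noteq> 0 \<and> \<pi> (dot n h2 h2) \<noteq> 0 \<and> dot n h1 h2 = 0 \<and> w = (\<lambda>j. h2 j + \<mu> * h1 j)"
proof -
  obtain \<epsilon> where \<epsilon>: "\<epsilon> * \<epsilon> = 1" "\<pi> (dot n w w + 2 * \<epsilon> + dot n z z) \<noteq> 0"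
    using exists_sign_residue_nonzero by blast
  define h1 where "h1 = (\<lambda>j. w j + \<epsilon> * z j)"
  have "dot n h1 h1 = dot n w w + \<epsilon> * dot n w z + \<epsilon> * dot n z w + (\<epsilon> * \<epsilon>) * dot n z z"
    by (simp add: h1_def algebra_simps)
  also have "\<dots> = dot n w w + 2 * \<epsilon> + dot n z z"
    using \<epsilon>(1) wz by (simp add: dot_commute[of n z w])
  finally have h1_norm: "dot n h1 h1 = dot n w w + 2 * \<epsilon> + dot n z z" .
  obtain \<gamma> where \<gamma>: "\<gamma> * dot n h1 h1 = 1" using unit_inverse \<epsilon>(2) unfolding h1_norm by blast
  define \<mu> where "\<mu> = dot n w h1 * \<gamma>"
  define h2 where "h2 = (\<lambda>j. w j - \<mu> * h1 j)"
  have h2_left: "dot n h2 y = dot n w y - \<mu> * dot n h1 y" for y by (simp add: h2_def)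
  have h1_h2: "dot n h1 h2 = 0"
  proof -
    have "dot n h1 h2 = dot n w h1 - \<mu> * dot n h1 h1" by (simp only: dot_commute[of n h1 h2] h2_left)
    also have "\<dots> = dot n w h1 * (1 - \<gamma> * dot n h1 h1)" by (simp add: \<mu>_def algebra_simps)
    finally show ?thesis using \<gamma> by simp
  qed
  have "dot n h2 h2 = dot n w h2 - \<mu> * dot n h1 h2" by (rule h2_left)
  also have "\<dots> = dot n w w - \<mu> * dot n w h1" using h1_h2 by (simp add: h2_def)
  also have "\<dots> = dot n w w - \<gamma> * dot n w h1 * dot n w h1" by (simp add: \<mu>_def algebra_simps)
  finally have "dot n h2 h2 = dot n w w - \<gamma> * dot n w h1 * dot n w h1" .
  moreover have "\<pi> (dot n w h1) = \<pi> \<epsilon>" using iso wz by (simp add: h1_def)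
  moreover have "\<pi> \<epsilon> * \<pi> \<epsilon> = 1" using arg_cong[OF \<epsilon>(1), of \<pi>] by simp
  moreover have "\<pi> \<gamma> * \<pi> (dot n h1 h1) = 1" using arg_cong[OF \<gamma>, of \<pi>] by simp
  ultimately have h2_unit: "\<pi> (dot n h2 h2) \<noteq> 0" using iso by (auto simp: mult.assoc)
  have h1_unit: "\<pi> (dot n h1 h1) \<noteq> 0" using \<epsilon>(2) h1_norm by simp
  have h1_orth: "h1 \<in> orth_compl n g T"
    using orth_compl_lincomb[OF w z, of 1 \<epsilon>] by (simp add: h1_def)
  have h2_orth: "h2 \<in> orth_compl n g T"
    using orth_compl_lincomb[OF w h1_orth, of 1 "- \<mu>"] by (simp add: h2_def)
  have w_eq: "w = (\<lambda>j. h2 j + \<mu> * h1 j)" by (simp add: h2_def)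
  show ?thesis
    using h1_orth h2_orth h1_unit h2_unit h1_h2 w_eq
    by (intro exI[of _ h1] exI[of _ h2] exI[of _ \<mu>]) (intro conjI; assumption)
qed

lemma nonsing_orth_family_absorb_primitive:
  assumes fam: "nonsing_orth_family \<pi> n g T" and v: "v \<in> orth_compl n g T" "i < n" "v i = 1"
  shows "\<exists>T' g'. T < T' \<and> T' \<le> T + 2 \<and> (formally_real TYPE('k) \<longrightarrow> T' = T + 1)
    \<and> nonsing_orth_family \<pi> n g' T' \<and> (\<forall>l<T. g' l = g l) \<and> (\<forall>x\<in>orth_compl n g' T'. dot n x v = 0)"
proof (cases "\<pi> (dot n v v) = 0")
  case False
  then show ?thesis
    using nonsing_orth_family_snoc[OF fam v(1) False]
    by (intro exI[of _ "Suc T"] exI[of _ "g(T := v)"]) (simp add: orth_compl_snoc)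
next
  case True
  \<comment> \<open>\<open>v\<close> spans a hyperbolic plane with the dual vector of the coordinate \<open>i\<close>\<close>
  obtain c where proj: "\<And>x. x \<in> vecs n \<Longrightarrow> orth_proj n g c T x \<in> orth_compl n g T"
    using nonsing_orth_family_proj[OF fam] by blast
  define z where "z = orth_proj n g c T (std_basis i)"
  have z: "z \<in> orth_compl n g T" unfolding z_def by (rule proj) (use v(2) in \<open>auto simp: vecs_def\<close>)
  have "dot n v z = 1" using v by (simp add: z_def dot_orth_proj_right)
  then obtain h1 h2 \<mu> where h: "h1 \<in> orth_compl n g T" "h2 \<in> orth_compl n g T"
    "\<pi> (dot n h1 h1) \<noteq> 0" "\<pi> (dot n h2 h2) \<noteq> 0" "dot n h1 h2 = 0" and v_h: "v = (\<lambda>j. h2 j + \<mu> * h1 j)"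
    using isotropic_vector_split[OF v(1) z True] by blast
  have fam1: "nonsing_orth_family \<pi> n (g(T := h1)) (Suc T)"
    by (rule nonsing_orth_family_snoc[OF fam h(1,3)])
  have "h2 \<in> orth_compl n (g(T := h1)) (Suc T)"
    using h(2,5) by (simp add: orth_compl_snoc dot_commute[of n h2 h1])
  then have "nonsing_orth_family \<pi> n (g(T := h1, Suc T := h2)) (Suc (Suc T))"
    by (rule nonsing_orth_family_snoc[OF fam1 _ h(4)])
  moreover have "\<forall>x\<in>orth_compl n (g(T := h1, Suc T := h2)) (Suc (Suc T)). dot n x v = 0"
    by (simp add: orth_compl_snoc v_h)
  moreover have "\<not> formally_real TYPE('k)"
    by (rule not_formally_real_if_isotropic[OF v(2,3) True])
  ultimately show ?thesis
    by (intro exI[of _ "Suc (Suc T)"] exI[of _ "g(T := h1, Suc T := h2)"]) simp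
qed

lemma nonsing_orth_family_absorb:
  assumes val: "valuation_ring TYPE('a)" and fam: "nonsing_orth_family \<pi> n g T" and w: "w \<in> vecs n"
  shows "\<exists>T' g'. T \<le> T' \<and> T' \<le> T + 2 \<and> (formally_real TYPE('k) \<longrightarrow> T' \<le> T + 1)
    \<and> nonsing_orth_family \<pi> n g' T' \<and> (\<forall>l<T. g' l = g l) \<and> (\<forall>x\<in>orth_compl n g' T'. dot n x w = 0)"
proof -
  obtain c where proj: "\<And>x. x \<in> vecs n \<Longrightarrow> orth_proj n g c T x \<in> orth_compl n g T"
    using nonsing_orth_family_proj[OF fam] by blast
  define w' where "w' = orth_proj n g c T w"
  have w': "w' \<in> orth_compl n g T" unfolding w'_def by (rule proj[OF w])
  have w_w': "dot n x w = dot n x w'" if "x \<in> orth_compl n g T" for x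
    unfolding w'_def using that by (rule dot_orth_proj_right[symmetric])
  show ?thesis
  proof (cases "w' = (\<lambda>_. 0)")
    case True
    then show ?thesis
      using fam w_w' by (intro exI[of _ T] exI[of _ g]) simp
  next
    case False
    have "w' \<in> vecs n" using w' by (simp add: orth_compl_def)
    then obtain a v i where v: "a \<noteq> 0" "i < n" "v \<in> vecs n" "v i = 1" and w'_v: "w' = (\<lambda>j. a * v j)"
      using valuation_ring_primitive_vector[OF val _ False] by blast
    have v_orth: "v \<in> orth_compl n g T"
      using w' v(1,3) unfolding w'_v by (simp add: orth_compl_def)
    obtain T' g' where T': "T < T'" "T' \<le> T + 2" "formally_real TYPE('k) \<longrightarrow> T' = T + 1"
      "nonsing_orth_family \<pi> n g' T'" "\<forall>l<T. g' l = g l" and v_perp: "\<forall>x\<in>orth_compl n g' T'. dot n x v = 0"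
      using nonsing_orth_family_absorb_primitive[OF fam v_orth v(2,4)] by blast
    have "\<forall>x\<in>orth_compl n g' T'. dot n x w = 0"
      using v_perp w_w' orth_compl_prefix[of T T' g' g n] T'(1,5) by (auto simp: w'_v)
    then show ?thesis using T' by (intro exI[of _ T'] exI[of _ g']) auto
  qed
qed

lemma nonsing_orth_family_absorb_all:
  assumes val: "valuation_ring TYPE('a)" and fam: "nonsing_orth_family \<pi> n g0 T0"
    and v: "\<forall>j<s. v j \<in> vecs n"
  shows "\<exists>T g. T0 \<le> T \<and> T \<le> T0 + 2 * s \<and> (formally_real TYPE('k) \<longrightarrow> T \<le> T0 + s)
    \<and> nonsing_orth_family \<pi> n g T \<and> (\<forall>l<T0. g l = g0 l) \<and> orth_compl n g T \<subseteq> orth_compl n v s"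
  using v
proof (induction s)
  case 0
  then show ?case using fam by (intro exI[of _ T0] exI[of _ g0]) (auto simp: orth_compl_def)
next
  case (Suc s)
  then obtain T g where IH: "T0 \<le> T" "T \<le> T0 + 2 * s" "formally_real TYPE('k) \<longrightarrow> T \<le> T0 + s"
    "nonsing_orth_family \<pi> n g T" "\<forall>l<T0. g l = g0 l" "orth_compl n g T \<subseteq> orth_compl n v s"
    by auto
  obtain T' g' where step: "T \<le> T'" "T' \<le> T + 2" "formally_real TYPE('k) \<longrightarrow> T' \<le> T + 1"
    "nonsing_orth_family \<pi> n g' T'" "\<forall>l<T. g' l = g l" "\<forall>x\<in>orth_compl n g' T'. dot n x (v s) = 0"
    using nonsing_orth_family_absorb[OF val IH(4), of "v s"] Suc.prems by auto
  have "orth_compl n g' T' \<subseteq> orth_compl n v s" using orth_compl_prefix[OF step(1,5)] IH(6) by blast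
  then have "orth_compl n g' T' \<subseteq> orth_compl n v (Suc s)" using step(6) by (auto simp: orth_compl_Suc)
  then show ?case using IH step by (intro exI[of _ T'] exI[of _ g']) auto
qed

section \<open>The complement of a non-singular family\<close>

lemma residue_polarization:
  assumes W: "\<forall>h\<in>orth_compl n g T. \<pi> (dot n h h) = 0"
    and x: "x \<in> orth_compl n g T" and y: "y \<in> orth_compl n g T"
  shows "\<pi> (dot n x y) = 0"
proof -
  have "(\<lambda>i. x i + y i) \<in> orth_compl n g T" using orth_compl_lincomb[OF x y, of 1 1] by simp
  then have "\<pi> (dot n (\<lambda>i. x i + y i) (\<lambda>i. x i + y i)) = 0" using W by blast
  then have "\<pi> (dot n x x) + \<pi> (dot n x y) + (\<pi> (dot n y x) + \<pi> (dot n y y)) = 0" by simp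
  then have "2 * \<pi> (dot n x y) = 0"
    using W x y by (subst (asm) dot_commute[of n y x]) simp
  then show ?thesis using two_res_neq_zero by simp
qed

lemma nonsing_orth_family_extend1:
  assumes fam: "nonsing_orth_family \<pi> n g T" and "T < n"
  shows "\<exists>h\<in>orth_compl n g T. \<pi> (dot n h h) \<noteq> 0"
proof (rule ccontr)
  assume "\<not> ?thesis"
  then have iso: "\<forall>h\<in>orth_compl n g T. \<pi> (dot n h h) = 0" by blast
  obtain c where proj: "\<And>x. x \<in> vecs n \<Longrightarrow> orth_proj n g c T x \<in> orth_compl n g T"
    using nonsing_orth_family_proj[OF fam] by blast
  define P where "P i = orth_proj n g c T (std_basis i)" for i
  have P: "P i \<in> orth_compl n g T" if "i < n" for i
    unfolding P_def by (rule proj) (use that in \<open>auto simp: vecs_def\<close>)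
  \<comment> \<open>the residues of the \<open>P i\<close> vanish, so each \<open>std_basis i\<close> reduces into the span of the \<open>g l\<close>\<close>
  have reduced: "std_basis i = (\<lambda>j. \<Sum>l<T. (\<pi> (c l) * \<pi> (g l i)) * \<pi> (g l j))"
    if i: "i < n" for i
  proof
    fix j
    show "std_basis i j = (\<Sum>l<T. (\<pi> (c l) * \<pi> (g l i)) * \<pi> (g l j))"
    proof (cases "j < n")
      case True
      have "dot n (P i) (P j) = dot n (P i) (std_basis j)"
        unfolding P_def[of j] by (rule dot_orth_proj_right[OF P[OF i]])
      then have "P i j = dot n (P i) (P j)" using True by simp
      then have "\<pi> (P i j) = 0" using residue_polarization[OF iso P[OF i] P[OF True]] by simp
      then show ?thesis using i by (cases "j = i") (simp_all add: P_def orth_proj_def mult.assoc)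
    next
      case False
      then have "g l j = 0" if "l < T" for l
        using fam that False by (simp add: nonsing_orth_family_def vecs_def)
      then show ?thesis using False i by simp
    qed
  qed
  have "\<forall>i<n. \<exists>d. std_basis i = (\<lambda>j. \<Sum>l<T. d l * \<pi> (g l j))"
  proof (intro allI impI exI)
    fix i assume "i < n"
    then show "std_basis i = (\<lambda>j. \<Sum>l<T. (\<pi> (c l) * \<pi> (g l i)) * \<pi> (g l j))"
      by (rule reduced)
  qed
  then have "n \<le> T" by (rule std_basis_in_span_card)
  with \<open>T < n\<close> show False by simp
qed

lemma nonsing_orth_family_extend:
  assumes "nonsing_orth_family \<pi> n g T" "T \<le> n"
  shows "\<exists>g'. nonsing_orth_family \<pi> n g' n \<and> (\<forall>l<T. g' l = g l)"
proof -
  have "\<exists>g'. nonsing_orth_family \<pi> n g' n \<and> (\<forall>l<T. g' l = g l)"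
    if "nonsing_orth_family \<pi> n g T" "n - T = k" "T \<le> n" for k g T
    using that
  proof (induction k arbitrary: g T)
    case 0
    then have "T = n" by simp
    then show ?case using 0(1) by (intro exI[of _ g]) simp
  next
    case (Suc k)
    then have "T < n" by simp
    then obtain h where h: "h \<in> orth_compl n g T" "\<pi> (dot n h h) \<noteq> 0"
      using nonsing_orth_family_extend1[OF Suc.prems(1)] by blast
    have "n - Suc T = k" "Suc T \<le> n" using Suc.prems(2,3) by simp_all
    then obtain g' where g': "nonsing_orth_family \<pi> n g' n" "\<forall>l<Suc T. g' l = (g(T := h)) l"
      using Suc.IH[OF nonsing_orth_family_snoc[OF Suc.prems(1) h]] by blast
    have "\<forall>l<T. g' l = g l" using g'(2) by simp
    then show ?case using g'(1) by blast
  qed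
  then show ?thesis using assms by blast
qed

lemma quad_submod_orth_compl:
  assumes fam: "nonsing_orth_family \<pi> n g T"
  shows "quad_submod n (orth_compl n g T)"
proof -
  obtain c where proj: "\<And>x. x \<in> vecs n \<Longrightarrow> orth_proj n g c T x \<in> orth_compl n g T"
    using nonsing_orth_family_proj[OF fam] by blast
  have g: "orthogonal_family n g T" "\<forall>l<T. g l \<in> vecs n" "\<forall>l<T. dot n (g l) (g l) \<noteq> 0"
    using fam by (auto simp: nonsing_orth_family_def)
  have "\<exists>y\<in>orth_compl n g T. \<exists>z\<in>span_frame g T. x = (\<lambda>i. y i + z i)" if x: "x \<in> vecs n" for x
  proof (intro bexI)
    show "x = (\<lambda>i. orth_proj n g c T x i + (\<Sum>l<T. (c l * dot n x (g l)) * g l i))"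
      by (simp add: orth_proj_def)
    show "orth_proj n g c T x \<in> orth_compl n g T" by (rule proj[OF x])
    show "(\<lambda>i. \<Sum>l<T. (c l * dot n x (g l)) * g l i) \<in> span_frame g T"
      unfolding span_frame_def by (intro CollectI exI[of _ "\<lambda>l. c l * dot n x (g l)"]) simp
  qed
  then show ?thesis
    unfolding quad_submod_def
    using submod_orth_compl submod_span_frame[OF g(2)] orth_compl_inter_span_frame[OF g(1,3)] by blast
qed

lemma orth_compl_radical:
  assumes fam: "nonsing_orth_family \<pi> n g T"
    and x: "x \<in> orth_compl n g T" and rad: "\<forall>y\<in>orth_compl n g T. Bq n x y = 0"
  shows "x = (\<lambda>_. 0)"
proof
  obtain c where proj: "\<And>x. x \<in> vecs n \<Longrightarrow> orth_proj n g c T x \<in> orth_compl n g T"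
    using nonsing_orth_family_proj[OF fam] by blast
  fix j
  show "x j = 0"
  proof (cases "j < n")
    case True
    then have "orth_proj n g c T (std_basis j) \<in> orth_compl n g T" by (intro proj) (simp add: vecs_def)
    then have "Bq n x (orth_proj n g c T (std_basis j)) = 0" using rad by blast
    then have "2 * x j = 0" using x True by (simp add: Bq_eq_dot dot_orth_proj_right)
    then show ?thesis using two_neq_zero by simp
  next
    case False
    then show ?thesis using x by (simp add: orth_compl_def vecs_def)
  qed
qed

lemma orth_compl_represent:
  assumes fam: "nonsing_orth_family \<pi> n g T" and \<phi>: "linear_functional (orth_compl n g T) \<phi>"
  shows "\<exists>x\<in>orth_compl n g T. \<forall>y\<in>orth_compl n g T. \<phi> y = Bq n x y"
proof -
  let ?W = "orth_compl n g T"
  obtain c where proj: "\<And>x. x \<in> vecs n \<Longrightarrow> orth_proj n g c T x \<in> ?W"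
    using nonsing_orth_family_proj[OF fam] by blast
  define P where "P i = orth_proj n g c T (std_basis i)" for i
  have P: "\<forall>i<n. P i \<in> ?W" unfolding P_def by (auto intro: proj simp: vecs_def)
  obtain h :: 'a where h: "1 = 2 * h" using two_unit by (auto simp: dvd_def)
  define z where "z i = (if i < n then \<phi> (P i) else 0)" for i
  define x where "x = orth_proj n g c T z"
  have x: "x \<in> ?W" unfolding x_def by (rule proj) (simp add: z_def vecs_def)
  have "\<phi> y = Bq n (\<lambda>j. h * x j) y" if y: "y \<in> ?W" for y
  proof -
    have "Bq n (\<lambda>j. h * x j) y = dot n y x" using h by (simp add: Bq_eq_dot dot_commute[of n x])
    also have "\<dots> = dot n y z" using y by (simp add: x_def dot_orth_proj_right)
    also have "\<dots> = (\<Sum>i<n. y i * \<phi> (P i))" by (simp add: dot_def z_def)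
    also have "\<dots> = \<phi> (\<lambda>j. \<Sum>i<n. y i * P i j)"
      using linear_functional_lincomb[OF \<phi> submod_orth_compl P] by simp
    also have "(\<lambda>j. \<Sum>i<n. y i * P i j) = y"
      using orth_compl_expansion[OF y, of c] by (simp add: P_def)
    finally show ?thesis by simp
  qed
  moreover have "(\<lambda>j. h * x j) \<in> ?W" using submod_scale[OF submod_orth_compl x] .
  ultimately show ?thesis by blast
qed

lemma nonsingular_orth_compl:
  assumes "nonsing_orth_family \<pi> n g T"
  shows "nonsingular n (orth_compl n g T)"
  unfolding nonsingular_def using orth_compl_radical[OF assms] orth_compl_represent[OF assms] by blast

lemma dim_res_ge_orth_compl:
  assumes ext: "nonsing_orth_family \<pi> n g' n" and agree: "\<forall>l<T. g' l = g l" and Td: "T + d \<le> n"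
  shows "dim_res_ge \<pi> (orth_compl n g T) d"
proof -
  have orth: "orthogonal_family n g' n" and g': "\<forall>l<n. g' l \<in> vecs n \<and> \<pi> (dot n (g' l) (g' l)) \<noteq> 0"
    using ext by (simp_all add: nonsing_orth_family_def)
  have orth_d: "orthogonal_family n (\<lambda>j. g' (T + j)) d"
    using orth Td by (simp add: orthogonal_family_def)
  have "g' (T + j) \<in> orth_compl n g T" if j: "j < d" for j
  proof -
    have "dot n (g' (T + j)) (g l) = 0" if l: "l < T" for l
    proof -
      have "g l = g' l" using agree l by simp
      then show ?thesis using orth j l Td by (simp add: orthogonal_family_def)
    qed
    then show ?thesis using g' j Td by (simp add: orth_compl_def)
  qed
  moreover have "\<pi> (cc j) = 0"
    if mem: "(\<lambda>i. \<Sum>j<d. cc j * g' (T + j) i) \<in> mW \<pi> (orth_compl n g T)" and j: "j < d" for cc j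
  proof -
    let ?x = "\<lambda>i. \<Sum>j<d. cc j * g' (T + j) i"
    have "(\<lambda>i. \<pi> (?x i)) = (\<lambda>_. 0)" using mW_residue[OF mem] by (simp add: fun_eq_iff)
    then have zero: "\<pi> (dot n ?x (g' (T + j))) = 0" by (simp only: pi_dot dot_zero_left)
    have eq: "dot n ?x (g' (T + j)) = cc j * dot n (g' (T + j)) (g' (T + j))"
      by (simp add: dot_sum_orthogonal_family[OF orth_d j])
    have "\<pi> (cc j) * \<pi> (dot n (g' (T + j)) (g' (T + j))) = 0"
      using zero unfolding eq pi_mult .
    then show ?thesis using g' j Td by simp
  qed
  ultimately show ?thesis
    unfolding dim_res_ge_def by (intro exI[of _ "\<lambda>j. g' (T + j)"]) blast
qed

lemma mA_good_unit_vector: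
  assumes good: "mA_good \<pi> M" and fam: "nonsing_orth_family \<pi> n g T" and "T + M \<le> n"
  shows "\<exists>x\<in>orth_compl n g T. qf n x = 1"
proof -
  obtain g' where "nonsing_orth_family \<pi> n g' n" "\<forall>l<T. g' l = g l"
    using nonsing_orth_family_extend[OF fam] \<open>T + M \<le> n\<close> by auto
  then have "dim_res_ge \<pi> (orth_compl n g T) M"
    using dim_res_ge_orth_compl \<open>T + M \<le> n\<close> by blast
  then show ?thesis
    using good quad_submod_orth_compl[OF fam] nonsingular_orth_compl[OF fam]
    unfolding mA_good_def by blast
qed

section \<open>Henselian lifting\<close>

lemma henselian_sqrt:
  assumes hen: "henselian \<pi>" and a: "\<pi> a = 1"
  shows "\<exists>t. t * t * a = 1"
proof -
  define f where "f = [:-1, 0, a:]"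
  have f_red: "map_poly \<pi> f = [:-1, 0, 1:]"
    unfolding f_def by (simp add: map_poly_pCons a)
  have "poly (map_poly \<pi> f) 1 = 0" "poly (pderiv (map_poly \<pi> f)) 1 \<noteq> 0"
    unfolding f_red using two_res_neq_zero by (simp_all add: pderiv_pCons)
  then obtain t where "poly f t = 0" using hen unfolding henselian_def by blast
  then have "-1 + t * (t * a) = 0" by (simp add: f_def)
  then show ?thesis by (intro exI[of _ t]) (simp add: add_eq_0_iff mult.assoc)
qed

lemma lift_orth_compl:
  assumes fam: "nonsing_orth_family \<pi> n g T" and xb: "xb \<in> vecs n"
    and xb_orth: "\<forall>l<T. dot n xb (\<lambda>i. \<pi> (g l i)) = 0"
  shows "\<exists>y\<in>orth_compl n g T. (\<lambda>i. \<pi> (y i)) = xb"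
proof -
  obtain c where proj: "\<And>x. x \<in> vecs n \<Longrightarrow> orth_proj n g c T x \<in> orth_compl n g T"
    using nonsing_orth_family_proj[OF fam] by blast
  define xa where "xa i = (if i < n then inv \<pi> (xb i) else 0)" for i
  have xa: "xa \<in> vecs n" by (simp add: xa_def vecs_def)
  have pi_xa: "(\<lambda>i. \<pi> (xa i)) = xb"
    using xb pi_surj by (auto simp: xa_def vecs_def surj_f_inv_f fun_eq_iff)
  have "\<pi> (dot n xa (g l)) = 0" if "l < T" for l
    using xb_orth that by (simp add: pi_dot pi_xa)
  then have "(\<lambda>i. \<pi> (orth_proj n g c T xa i)) = (\<lambda>i. \<pi> (xa i))"
    by (simp add: orth_proj_def)
  then show ?thesis using proj[OF xa] pi_xa by auto
qed

lemma henselian_unit_vector_orth_compl: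
  assumes hen: "henselian \<pi>" and fam: "nonsing_orth_family \<pi> n g (s + c)"
    and norm1: "\<forall>j<s. dot n (g j) (g j) = 1"
    and pyth: "0 < c \<longrightarrow> pyth_good TYPE('k) p" and small: "c * p + s < n"
  shows "\<exists>x\<in>orth_compl n g (s + c). qf n x = 1"
proof -
  define gk where "gk l = (\<lambda>i. \<pi> (g l i))" for l
  have gk_dot: "dot n (gk l) (gk m) = \<pi> (dot n (g l) (g m))" for l m
    by (simp add: gk_def pi_dot)
  have "sum_of_p_squares (dot n (gk (s + i)) (gk (s + i))) p" if "i < c" for i
  proof -
    have "sum_of_squares (dot n (gk (s + i)) (gk (s + i)))"
      unfolding sum_of_squares_def sum_of_p_squares_def dot_def
      by (intro exI[of _ n] exI[of _ "gk (s + i)"]) (simp add: power2_eq_square)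
    then show ?thesis using pyth that unfolding pyth_good_def by simp
  qed
  moreover have "\<forall>l<s + c. gk l \<in> vecs n"
    using fam by (simp add: nonsing_orth_family_def vecs_def gk_def)
  moreover have "orthogonal_family n gk (s + c)"
    using fam by (simp add: nonsing_orth_family_def orthogonal_family_def gk_dot)
  moreover have "\<forall>i<c. dot n (gk (s + i)) (gk (s + i)) \<noteq> 0"
    using fam by (simp add: nonsing_orth_family_def gk_dot)
  moreover have "\<forall>j<s. dot n (gk j) (gk j) = 1" using norm1 by (simp add: gk_dot)
  ultimately obtain xb where xb: "xb \<in> vecs n" "dot n xb xb = 1" "\<forall>l<s + c. dot n xb (gk l) = 0"
    using unit_vector_orth_small_family[OF two_res_neq_zero _ _ _ _ small] by blast
  obtain y where y: "y \<in> orth_compl n g (s + c)" and y_red: "(\<lambda>i. \<pi> (y i)) = xb"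
    using lift_orth_compl[OF fam xb(1)] xb(3) by (auto simp: gk_def)
  have "\<pi> (dot n y y) = 1" using xb(2) by (simp add: pi_dot y_red)
  then obtain t where t: "t * t * dot n y y = 1" using henselian_sqrt[OF hen] by blast
  have "(\<lambda>i. t * y i + 0 * y i) \<in> orth_compl n g (s + c)" by (rule orth_compl_lincomb[OF y y])
  moreover have "qf n (\<lambda>i. t * y i) = 1" using t by (simp add: qf_eq_dot mult.assoc)
  ultimately show ?thesis by auto
qed

end

lemma m_A_enat:
  assumes "m_A \<pi> \<noteq> \<infinity>"
  shows "\<exists>M. mA_good \<pi> M \<and> m_A \<pi> = enat M"
proof -
  have ex: "\<exists>m\<ge>1. mA_good \<pi> m" using assms by (auto simp: m_A_def split: if_splits)
  define M where "M = (LEAST m. m \<ge> 1 \<and> mA_good \<pi> m)"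
  have "mA_good \<pi> M" using LeastI_ex[OF ex[unfolded Bex_def]] by (simp add: M_def)
  moreover have "m_A \<pi> = enat M" using ex by (simp add: m_A_def M_def)
  ultimately show ?thesis by blast
qed

lemma pythagoras_number_less_enat:
  assumes "pythagoras_number K * enat q + enat s < enat n"
  shows "\<exists>p. (0 < q \<longrightarrow> pyth_good K p) \<and> p * q + s < n"
proof (cases "\<exists>p\<ge>1. pyth_good K p")
  case True
  define p where "p = (LEAST p. p \<ge> 1 \<and> pyth_good K p)"
  have "pyth_good K p" using LeastI_ex[OF True[unfolded Bex_def]] by (simp add: p_def)
  moreover have "pythagoras_number K = enat p" using True by (simp add: pythagoras_number_def p_def)
  ultimately show ?thesis using assms by auto
next
  case False
  then have "pythagoras_number K = \<infinity>" by (simp add: pythagoras_number_def)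
  then have "q = 0" "s < n" using assms by (auto simp: imult_is_infinity zero_enat_def split: if_splits)
  then show ?thesis by auto
qed

context residue_hom
begin

lemma m_A_route:
  fixes u v :: "nat \<Rightarrow> nat \<Rightarrow> 'a"
  assumes val: "valuation_ring TYPE('a)" and u: "frame n u r" and v: "\<forall>j<s. v j \<in> vecs n"
    and dim: "m_A \<pi> + enat (r + 2 * s) \<le> enat n
      \<or> (formally_real TYPE('k) \<and> m_A \<pi> + enat (r + s) \<le> enat n)"
  shows "\<exists>x. qf n x = 1 \<and> x \<in> orth_compl n u r \<inter> orth_compl n v s"
proof -
  have "m_A \<pi> \<noteq> \<infinity>" using dim by (cases "m_A \<pi>") auto
  then obtain M where good: "mA_good \<pi> M" and M: "m_A \<pi> = enat M" using m_A_enat by blast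
  obtain T g where T: "r \<le> T" "T \<le> r + 2 * s" "formally_real TYPE('k) \<longrightarrow> T \<le> r + s"
    and fam: "nonsing_orth_family \<pi> n g T" and agree: "\<forall>l<r. g l = u l"
    and sub: "orth_compl n g T \<subseteq> orth_compl n v s"
    using nonsing_orth_family_absorb_all[OF val frame_nonsing_orth_family[OF u] v] by blast
  have "T + M \<le> n" using T dim M by auto
  then obtain x where "x \<in> orth_compl n g T" "qf n x = 1"
    using mA_good_unit_vector[OF good fam] by blast
  then show ?thesis using sub orth_compl_prefix[OF T(1) agree] by blast
qed

lemma henselian_route:
  fixes u v :: "nat \<Rightarrow> nat \<Rightarrow> 'a"
  assumes val: "valuation_ring TYPE('a)" and hen: "henselian \<pi>"
    and v: "frame n v s" and u: "\<forall>i<r. u i \<in> vecs n"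
    and dim: "pythagoras_number TYPE('k) * enat (2 * r) + enat s < enat n
      \<or> (formally_real TYPE('k) \<and> pythagoras_number TYPE('k) * enat r + enat s < enat n)"
  shows "\<exists>x. qf n x = 1 \<and> x \<in> orth_compl n u r \<inter> orth_compl n v s"
proof -
  obtain p where pyth: "0 < r \<longrightarrow> pyth_good TYPE('k) p"
    and p_dim: "p * (2 * r) + s < n \<or> (formally_real TYPE('k) \<and> p * r + s < n)"
    using dim pythagoras_number_less_enat[of "TYPE('k)" "2 * r" s n]
      pythagoras_number_less_enat[of "TYPE('k)" r s n] by auto
  obtain T g where T: "s \<le> T" "T \<le> s + 2 * r" "formally_real TYPE('k) \<longrightarrow> T \<le> s + r"
    and fam: "nonsing_orth_family \<pi> n g T" and agree: "\<forall>l<s. g l = v l"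
    and sub: "orth_compl n g T \<subseteq> orth_compl n u r"
    using nonsing_orth_family_absorb_all[OF val frame_nonsing_orth_family[OF v] u] by blast
  define c where "c = T - s"
  have "c \<le> 2 * r" "formally_real TYPE('k) \<longrightarrow> c \<le> r" using T by (auto simp: c_def)
  then have cp: "c * p \<le> p * (2 * r)" "formally_real TYPE('k) \<longrightarrow> c * p \<le> p * r"
    using mult_le_mono1[of c "2 * r" p] mult_le_mono1[of c r p] by (simp_all add: ac_simps)
  from p_dim have "c * p + s < n"
  proof
    assume "p * (2 * r) + s < n"
    then show ?thesis using cp(1) by linarith
  next
    assume "formally_real TYPE('k) \<and> p * r + s < n"
    then show ?thesis using cp(2) by linarith
  qed
  moreover have "0 < c \<longrightarrow> pyth_good TYPE('k) p" using pyth T by (auto simp: c_def)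
  moreover have "nonsing_orth_family \<pi> n g (s + c)" using fam T(1) by (simp add: c_def)
  moreover have "\<forall>j<s. dot n (g j) (g j) = 1" using agree frame_dot_self[OF v] by simp
  ultimately obtain x where "x \<in> orth_compl n g (s + c)" "qf n x = 1"
    using henselian_unit_vector_orth_compl[OF hen] by blast
  then show ?thesis using sub orth_compl_prefix[OF T(1) agree] T(1) by (auto simp: c_def)
qed

end

theorem proposition2p10:
  fixes \<pi> :: "'a::idom \<Rightarrow> 'k::field"
    and n r s :: nat
    and u v :: "nat \<Rightarrow> nat \<Rightarrow> 'a"
  assumes "valuation_ring TYPE('a)"
    and "residue_map \<pi>"
    and "(2::'a) dvd 1"
    and "frame n u r"
    and "frame n v s"
    and "(enat n \<ge> m_A \<pi> + enat r + 2 * enat s)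
         \<or> (enat n \<ge> m_A \<pi> + enat r + enat s \<and> formally_real TYPE('k))
         \<or> (enat n > 2 * pythagoras_number TYPE('k) * enat r + enat s \<and> henselian \<pi>)
         \<or> (enat n > pythagoras_number TYPE('k) * enat r + enat s \<and> henselian \<pi>
              \<and> formally_real TYPE('k))"
  shows "\<exists>x. unit_vector n x \<and> x \<in> perp n (span_frame u r) \<inter> perp n (span_frame v s)"
proof -
  interpret residue_hom \<pi> using assms(2,3) by unfold_locales
  have u: "\<forall>i<r. u i \<in> vecs n" and v: "\<forall>j<s. v j \<in> vecs n"
    using assms(4,5) by (simp_all add: frame_def unit_vector_def)
  from assms(6) consider
      "m_A \<pi> + enat (r + 2 * s) \<le> enat n
        \<or> (formally_real TYPE('k) \<and> m_A \<pi> + enat (r + s) \<le> enat n)"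
    | "henselian \<pi>" "pythagoras_number TYPE('k) * enat (2 * r) + enat s < enat n
        \<or> (formally_real TYPE('k) \<and> pythagoras_number TYPE('k) * enat r + enat s < enat n)"
    by (auto simp: add.assoc numeral_eq_enat mult.commute mult.left_commute)
  then have "\<exists>x. qf n x = 1 \<and> x \<in> orth_compl n u r \<inter> orth_compl n v s"
  proof cases
    case 1
    then show ?thesis by (rule m_A_route[OF assms(1,4) v])
  next
    case 2
    then show ?thesis by (rule henselian_route[OF assms(1) _ assms(5) u])
  qed
  then show ?thesis using perp_span_frame[OF two_neq_zero] by (auto simp: unit_vector_def orth_compl_def)
qed

end
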